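(* Let $a,x,b,y\ge1$ be integers and $\lambda/\mu=(a+b+1,(a+1)^x,1^y)/(1)$. Then $\mathrm{supp}(\lambda/\mu)=[\mathbf w,\mathbf n]$ if and only if $b=y=1$. In that case $[\mathbf w,\mathbf n]=\mathrm{supp}(\lambda/\mu)=\{((x+1)^{a+1},1),\,(x+2,(x+1)^{a-1},x,1),\,(x+2,(x+1)^a)\}$ and $s_{\lambda/\mu}$ is the sum of the three Schur functions $s_{\xi'}$ for these $\xi$, each with coefficient $1$.
   Context: For $\mu\subseteq\lambda$, $\lambda/\mu$ is the skew diagram of boxes of $\lambda$ not in $\mu$ (English notation); $\xi'$ is the conjugate partition. $\mathbf w$ is the partition of column lengths sorted decreasingly, $\mathbf n$ the conjugate of the partition of row lengths sorted decreasingly, $[\mathbf w,\mathbf n]$ the dominance interval, and $\mathrm{supp}(\lambda/\mu)=\{\nu':c^\lambda_{\mu\nu}>0\}$ where $s_{\lambda/\mu}=\sum_\nu c^\lambda_{\mu\nu}s_\nu$. *)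

theory Defs
  imports Main
begin

definition is_partition :: "nat list \<Rightarrow> bool" where
  "is_partition \<nu> \<longleftrightarrow> sorted_wrt (\<ge>) \<nu> \<and> 0 \<notin> set \<nu>"

definition conj_part :: "nat list \<Rightarrow> nat list" where
  "conj_part \<nu> = map (\<lambda>j. length (filter (\<lambda>p. j < p) \<nu>)) [0..<(if \<nu> = [] then 0 else hd \<nu>)]"

text \<open>Boxes (row i, column j), 0-indexed, English notation, of lambda/mu.\<close>
definition skew_cells :: "nat list \<Rightarrow> nat list \<Rightarrow> (nat \<times> nat) set" where
  "skew_cells lam mu = {(i, j). i < length lam \<and> j < lam ! i \<and> \<not> (i < length mu \<and> j < mu ! i)}"

definition sort_desc :: "nat list \<Rightarrow> nat list" where
  "sort_desc xs = rev (sort xs)"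

text \<open>Nonzero column lengths of lambda/mu, sorted decreasingly (the partition w).\<close>
definition skew_w :: "nat list \<Rightarrow> nat list \<Rightarrow> nat list" where
  "skew_w lam mu = sort_desc (filter (\<lambda>l. 0 < l)
      (map (\<lambda>j. card {i. (i, j) \<in> skew_cells lam mu}) [0..<(if lam = [] then 0 else hd lam)]))"

text \<open>Conjugate of the nonzero row lengths sorted decreasingly (the partition n).\<close>
definition skew_n :: "nat list \<Rightarrow> nat list \<Rightarrow> nat list" where
  "skew_n lam mu = conj_part (sort_desc (filter (\<lambda>l. 0 < l)
      (map (\<lambda>i. card {j. (i, j) \<in> skew_cells lam mu}) [0..<length lam])))"

definition dominates_le :: "nat list \<Rightarrow> nat list \<Rightarrow> bool" where
  "dominates_le \<nu> \<rho> \<longleftrightarrow> sum_list \<nu> = sum_list \<rho> \<and>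
      (\<forall>k. sum_list (take k \<nu>) \<le> sum_list (take k \<rho>))"

definition dom_interval :: "nat list \<Rightarrow> nat list \<Rightarrow> nat list set" where
  "dom_interval w n = {\<nu>. is_partition \<nu> \<and> dominates_le w \<nu> \<and> dominates_le \<nu> n}"

text \<open>Semistandard (skew) tableaux of shape lambda/mu with content alpha
  (entry k+1 occurs alpha!k times); the tableau is zero outside the shape.\<close>
definition ssyt :: "nat list \<Rightarrow> nat list \<Rightarrow> nat list \<Rightarrow> (nat \<times> nat \<Rightarrow> nat) set" where
  "ssyt lam mu \<alpha> = {T.
     (\<forall>c. c \<notin> skew_cells lam mu \<longrightarrow> T c = 0) \<and>
     (\<forall>c\<in>skew_cells lam mu. 1 \<le> T c \<and> T c \<le> length \<alpha>) \<and>
     (\<forall>i j. (i, j) \<in> skew_cells lam mu \<longrightarrow> (i, Suc j) \<in> skew_cells lam mu \<longrightarrow> T (i, j) \<le> T (i, Suc j)) \<and>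
     (\<forall>i j. (i, j) \<in> skew_cells lam mu \<longrightarrow> (Suc i, j) \<in> skew_cells lam mu \<longrightarrow> T (i, j) < T (Suc i, j)) \<and>
     (\<forall>k < length \<alpha>. card {c \<in> skew_cells lam mu. T c = Suc k} = \<alpha> ! k)}"

text \<open>Skew Kostka number = coefficient of x^alpha in s_{lambda/mu}.\<close>
definition kostka :: "nat list \<Rightarrow> nat list \<Rightarrow> nat list \<Rightarrow> nat" where
  "kostka lam mu \<alpha> = card (ssyt lam mu \<alpha>)"

definition partitions_of :: "nat \<Rightarrow> nat list set" where
  "partitions_of m = {\<nu>. is_partition \<nu> \<and> sum_list \<nu> = m}"

text \<open>The Schur expansion coefficients c^lambda_{mu nu}: the unique integer
  coefficients (supported on partitions of |lambda/mu|) with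
  s_{lambda/mu} = sum_nu c_nu s_nu, compared coefficientwise on all monomials x^alpha.\<close>
definition lr_coeff :: "nat list \<Rightarrow> nat list \<Rightarrow> nat list \<Rightarrow> int" where
  "lr_coeff lam mu = (THE c.
      (\<forall>\<nu>. \<nu> \<notin> partitions_of (card (skew_cells lam mu)) \<longrightarrow> c \<nu> = 0) \<and>
      (\<forall>\<alpha>. int (kostka lam mu \<alpha>) =
          (\<Sum>\<nu>\<in>partitions_of (card (skew_cells lam mu)). c \<nu> * int (kostka \<nu> [] \<alpha>))))"

definition skew_supp :: "nat list \<Rightarrow> nat list \<Rightarrow> nat list set" where
  "skew_supp lam mu = {conj_part \<nu> | \<nu>. is_partition \<nu> \<and> lr_coeff lam mu \<nu> > 0}"

end

theory Submission
  imports Defs "HOL-Library.FuncSet" "HOL-Library.Multiset"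
begin

(*
  Removing a single box from the origin gives s_{lambda/1} = sum of s_{lambda - c} over
  the removable corners c of lambda.  We prove this on the level of Kostka numbers: jeu de
  taquin slides the empty origin of a semistandard tableau of shape lambda/1 out to a removable
  corner, and this is a content-preserving bijection.  Because the Kostka matrix of straight
  shapes is unitriangular for dominance, the Schur expansion is unique, so lr_coeff lambda [1]
  is the indicator of the shapes lambda - c.  Our lambda has three removable corners, so the
  support consists of the three conjugates of these shapes.  If b >= 2 or y >= 2 an explicit partition lies in [w, n] but not in
  the support; if b = y = 1 a classification of the partitions squeezed between w and n shows
  that [w, n] consists of exactly the three partitions of the support.
*)

definition down_closed :: "(nat \<times> nat) set \<Rightarrow> bool" where
  "down_closed Y \<longleftrightarrow> (\<forall>i j i' j'. (i, j) \<in> Y \<longrightarrow> i' \<le> i \<longrightarrow> j' \<le> j \<longrightarrow> (i', j') \<in> Y)"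

lemma down_closedD: "down_closed Y \<Longrightarrow> (i, j) \<in> Y \<Longrightarrow> i' \<le> i \<Longrightarrow> j' \<le> j \<Longrightarrow> (i', j') \<in> Y"
  unfolding down_closed_def by blast

definition removable_corner :: "(nat \<times> nat) set \<Rightarrow> nat \<times> nat \<Rightarrow> bool" where
  "removable_corner Y c \<longleftrightarrow> c \<in> Y \<and> (Suc (fst c), snd c) \<notin> Y \<and> (fst c, Suc (snd c)) \<notin> Y"

definition ssyt_on :: "(nat \<times> nat) set \<Rightarrow> nat list \<Rightarrow> (nat \<times> nat \<Rightarrow> nat) set" where
  "ssyt_on S \<alpha> = {T.
     (\<forall>c. c \<notin> S \<longrightarrow> T c = 0) \<and>
     (\<forall>c\<in>S. 1 \<le> T c \<and> T c \<le> length \<alpha>) \<and>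
     (\<forall>i j. (i, j) \<in> S \<longrightarrow> (i, Suc j) \<in> S \<longrightarrow> T (i, j) \<le> T (i, Suc j)) \<and>
     (\<forall>i j. (i, j) \<in> S \<longrightarrow> (Suc i, j) \<in> S \<longrightarrow> T (i, j) < T (Suc i, j)) \<and>
     (\<forall>k < length \<alpha>. card {c \<in> S. T c = Suc k} = \<alpha> ! k)}"

lemma ssyt_eq_ssyt_on: "ssyt lam mu \<alpha> = ssyt_on (skew_cells lam mu) \<alpha>"
  unfolding ssyt_def ssyt_on_def by simp

lemma ssyt_onD:
  assumes "T \<in> ssyt_on S \<alpha>"
  shows "c \<notin> S \<Longrightarrow> T c = 0"
    and "c \<in> S \<Longrightarrow> 1 \<le> T c \<and> T c \<le> length \<alpha>"
    and "(i, j) \<in> S \<Longrightarrow> (i, Suc j) \<in> S \<Longrightarrow> T (i, j) \<le> T (i, Suc j)"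
    and "(i, j) \<in> S \<Longrightarrow> (Suc i, j) \<in> S \<Longrightarrow> T (i, j) < T (Suc i, j)"
    and "k < length \<alpha> \<Longrightarrow> card {c \<in> S. T c = Suc k} = \<alpha> ! k"
  using assms unfolding ssyt_on_def by blast+

lemma ssyt_onI:
  assumes "\<And>c. c \<notin> S \<Longrightarrow> T c = 0" "\<And>c. c \<in> S \<Longrightarrow> 1 \<le> T c \<and> T c \<le> length \<alpha>"
     "\<And>i j. (i, j) \<in> S \<Longrightarrow> (i, Suc j) \<in> S \<Longrightarrow> T (i, j) \<le> T (i, Suc j)"
     "\<And>i j. (i, j) \<in> S \<Longrightarrow> (Suc i, j) \<in> S \<Longrightarrow> T (i, j) < T (Suc i, j)"
     "\<And>k. k < length \<alpha> \<Longrightarrow> card {c \<in> S. T c = Suc k} = \<alpha> ! k"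
  shows "T \<in> ssyt_on S \<alpha>"
  using assms unfolding ssyt_on_def by blast

text \<open>A filling is determined by its values on the finite set \<open>S\<close>, which lie in \<open>{0..n}\<close>.\<close>
lemma finite_bounded_fillings:
  assumes "finite S"
  shows "finite {T :: 'a \<Rightarrow> nat. (\<forall>c. c \<notin> S \<longrightarrow> T c = 0) \<and> (\<forall>c. T c \<le> n)}" (is "finite ?A")
proof -
  have inj: "inj_on (\<lambda>T. restrict T S) ?A"
  proof (rule inj_onI)
    fix T1 T2 assume "T1 \<in> ?A" "T2 \<in> ?A" and eq: "restrict T1 S = restrict T2 S"
    show "T1 = T2"
    proof
      fix c show "T1 c = T2 c"
        using \<open>T1 \<in> ?A\<close> \<open>T2 \<in> ?A\<close> fun_cong[OF eq, of c] by (cases "c \<in> S") auto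
    qed
  qed
  have "(\<lambda>T. restrict T S) ` ?A \<subseteq> PiE S (\<lambda>_. {..n})" by auto
  moreover have "finite (PiE S (\<lambda>_. {..n}))" using assms by (simp add: finite_PiE)
  ultimately have "finite ((\<lambda>T. restrict T S) ` ?A)" by (rule finite_subset)
  then show ?thesis by (rule finite_imageD[OF _ inj])
qed

lemma finite_ssyt_on: "finite S \<Longrightarrow> finite (ssyt_on S \<alpha>)"
  by (rule finite_subset[OF _ finite_bounded_fillings[of S "length \<alpha>"]]) (auto simp: ssyt_on_def)

definition entry_count :: "(nat \<times> nat) set \<Rightarrow> (nat \<times> nat \<Rightarrow> nat) \<Rightarrow> nat \<Rightarrow> nat" where
  "entry_count Y T m = card {c \<in> Y. T c = Suc m}"

lemma entry_count_move:
  assumes "finite Y" "h \<in> Y" "d \<in> Y" "h \<noteq> d" "T h = 0"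
  shows "entry_count Y (T(h := T d, d := 0)) m = entry_count Y T m"
proof (cases "T d = Suc m")
  case True
  define A where "A = {c \<in> Y. T c = Suc m}"
  have "{c \<in> Y. (T(h := T d, d := 0)) c = Suc m} = insert h (A - {d})"
    using assms True unfolding A_def by auto
  moreover have "d \<in> A" "h \<notin> A" "finite A" using True assms unfolding A_def by auto
  ultimately show ?thesis unfolding entry_count_def A_def[symmetric]
    by (simp add: card_insert_if card_Diff_singleton) (metis Suc_pred card_gt_0_iff empty_iff)
next
  case False
  then have "{c \<in> Y. (T(h := T d, d := 0)) c = Suc m} = {c \<in> Y. T c = Suc m}"
    using assms by auto
  then show ?thesis unfolding entry_count_def by simp
qed

section \<open>Jeu de taquin slides\<close>

text \<open>The invariant of a jeu de taquin slide inside a diagram \<open>Y\<close>: \<open>T\<close> is a semistandard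
  filling (entries in \<open>1..n\<close>) of \<open>Y\<close> with the single cell \<open>h\<close> (the hole) left empty, and
  the row and column conditions also hold across the hole.\<close>
definition hole_filling :: "(nat \<times> nat) set \<Rightarrow> nat \<Rightarrow> (nat \<times> nat \<Rightarrow> nat) \<Rightarrow> nat \<times> nat \<Rightarrow> bool" where
  "hole_filling Y n T h \<longleftrightarrow> h \<in> Y \<and> (\<forall>c. c \<notin> Y - {h} \<longrightarrow> T c = 0) \<and> (\<forall>c\<in>Y - {h}. 1 \<le> T c \<and> T c \<le> n) \<and>
    (\<forall>i j. (i, j) \<in> Y - {h} \<longrightarrow> (i, Suc j) \<in> Y - {h} \<longrightarrow> T (i, j) \<le> T (i, Suc j)) \<and>
    (\<forall>i j. (i, j) \<in> Y - {h} \<longrightarrow> (Suc i, j) \<in> Y - {h} \<longrightarrow> T (i, j) < T (Suc i, j)) \<and>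
    (\<forall>i j. h = (Suc i, j) \<longrightarrow> (Suc (Suc i), j) \<in> Y \<longrightarrow> T (i, j) < T (Suc (Suc i), j)) \<and>
    (\<forall>i j. h = (i, Suc j) \<longrightarrow> (i, Suc (Suc j)) \<in> Y \<longrightarrow> T (i, j) \<le> T (i, Suc (Suc j)))"

lemma hole_fillingI:
  assumes "h \<in> Y" "\<And>c. c \<notin> Y - {h} \<Longrightarrow> T c = 0" "\<And>c. c \<in> Y - {h} \<Longrightarrow> 1 \<le> T c \<and> T c \<le> n"
    "\<And>i j. (i, j) \<in> Y - {h} \<Longrightarrow> (i, Suc j) \<in> Y - {h} \<Longrightarrow> T (i, j) \<le> T (i, Suc j)"
    "\<And>i j. (i, j) \<in> Y - {h} \<Longrightarrow> (Suc i, j) \<in> Y - {h} \<Longrightarrow> T (i, j) < T (Suc i, j)"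
    "\<And>i j. h = (Suc i, j) \<Longrightarrow> (Suc (Suc i), j) \<in> Y \<Longrightarrow> T (i, j) < T (Suc (Suc i), j)"
    "\<And>i j. h = (i, Suc j) \<Longrightarrow> (i, Suc (Suc j)) \<in> Y \<Longrightarrow> T (i, j) \<le> T (i, Suc (Suc j))"
  shows "hole_filling Y n T h"
  unfolding hole_filling_def using assms by auto

lemma hole_fillingD:
  assumes "hole_filling Y n T h"
  shows "h \<in> Y" and "c \<notin> Y - {h} \<Longrightarrow> T c = 0" and "c \<in> Y - {h} \<Longrightarrow> 1 \<le> T c \<and> T c \<le> n"
    and "(i, j) \<in> Y - {h} \<Longrightarrow> (i, Suc j) \<in> Y - {h} \<Longrightarrow> T (i, j) \<le> T (i, Suc j)"
    and "(i, j) \<in> Y - {h} \<Longrightarrow> (Suc i, j) \<in> Y - {h} \<Longrightarrow> T (i, j) < T (Suc i, j)"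
    and "h = (Suc i, j) \<Longrightarrow> (Suc (Suc i), j) \<in> Y \<Longrightarrow> T (i, j) < T (Suc (Suc i), j)"
    and "h = (i, Suc j) \<Longrightarrow> (i, Suc (Suc j)) \<in> Y \<Longrightarrow> T (i, j) \<le> T (i, Suc (Suc j))"
  using assms unfolding hole_filling_def by (simp_all del: split_paired_All)

text \<open>Moving the hole down (resp. right) swaps it
  with the smaller of its lower and right neighbours, ties going to the lower one; moving it
  up (resp. left) is the reverse choice.\<close>

lemma hole_filling_move_down:
  assumes dc: "down_closed Y" and I: "hole_filling Y n T (i, j)" and d: "(Suc i, j) \<in> Y"
    and ch: "(i, Suc j) \<in> Y \<Longrightarrow> T (Suc i, j) \<le> T (i, Suc j)"
  shows "hole_filling Y n (T((i, j) := T (Suc i, j), (Suc i, j) := 0)) (Suc i, j)" (is "hole_filling Y n ?T _")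
proof -
  note D = down_closedD[OF dc]
  note I0 = hole_fillingD[OF I]
  have hY: "(i, j) \<in> Y" by (rule I0(1))
  show ?thesis
  proof (rule hole_fillingI)
    show "(Suc i, j) \<in> Y" by fact
    show "?T c = 0" if "c \<notin> Y - {(Suc i, j)}" for c
      using that hY I0(2)[of c] by auto
    show "1 \<le> ?T c \<and> ?T c \<le> n" if "c \<in> Y - {(Suc i, j)}" for c
      using that I0(3)[of c] I0(3)[of "(Suc i, j)"] d by auto
  next
    fix a b assume 1: "(a, b) \<in> Y - {(Suc i, j)}" and 2: "(a, Suc b) \<in> Y - {(Suc i, j)}"
    show "?T (a, b) \<le> ?T (a, Suc b)"
    proof (cases "(a, b) = (i, j)")
      case True
      then show ?thesis using 2 ch by auto
    next
      case F1: False
      show ?thesis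
      proof (cases "(a, Suc b) = (i, j)")
        case True
        then have ab: "a = i" "j = Suc b" by auto
        have "(Suc i, b) \<in> Y" using D[OF d, of "Suc i" b] ab by simp
        then have "T (i, b) < T (Suc i, b)" using I0(5)[of i b] 1 ab by auto
        moreover have "T (Suc i, b) \<le> T (Suc i, j)" using I0(4)[of "Suc i" b] \<open>(Suc i, b) \<in> Y\<close> d ab by auto
        ultimately show ?thesis using ab by auto
      next
        case False
        then show ?thesis using F1 1 2 I0(4)[of a b] by auto
      qed
    qed
  next
    fix a b assume 1: "(a, b) \<in> Y - {(Suc i, j)}" and 2: "(Suc a, b) \<in> Y - {(Suc i, j)}"
    show "?T (a, b) < ?T (Suc a, b)"
    proof (cases "(Suc a, b) = (i, j)")
      case True
      then show ?thesis using I0(6)[of a b] d by auto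
    next
      case False
      then show ?thesis using 1 2 I0(5)[of a b] by auto
    qed
  next
    fix a b assume "(Suc i, j) = (Suc a, b)" "(Suc (Suc a), b) \<in> Y"
    then show "?T (a, b) < ?T (Suc (Suc a), b)" using I0(5)[of "Suc i" j] d by auto
  next
    fix a b assume ab0: "(Suc i, j) = (a, Suc b)" and 3: "(a, Suc (Suc b)) \<in> Y"
    then have ab: "a = Suc i" "j = Suc b" by auto
    have "(Suc i, b) \<in> Y" using D[OF d, of "Suc i" b] ab by simp
    then have "T (Suc i, b) \<le> T (Suc i, j)" using I0(4)[of "Suc i" b] d ab by auto
    moreover have "T (Suc i, j) \<le> T (Suc i, Suc j)" using I0(4)[of "Suc i" j] d 3 ab by auto
    ultimately show "?T (a, b) \<le> ?T (a, Suc (Suc b))" using ab by auto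
  qed
qed

lemma hole_filling_move_right:
  assumes dc: "down_closed Y" and I: "hole_filling Y n T (i, j)" and r: "(i, Suc j) \<in> Y"
    and ch: "(Suc i, j) \<in> Y \<Longrightarrow> T (i, Suc j) < T (Suc i, j)"
  shows "hole_filling Y n (T((i, j) := T (i, Suc j), (i, Suc j) := 0)) (i, Suc j)" (is "hole_filling Y n ?T _")
proof -
  note D = down_closedD[OF dc]
  note I0 = hole_fillingD[OF I]
  have hY: "(i, j) \<in> Y" by (rule I0(1))
  show ?thesis
  proof (rule hole_fillingI)
    show "(i, Suc j) \<in> Y" by fact
    show "?T c = 0" if "c \<notin> Y - {(i, Suc j)}" for c
      using that hY I0(2)[of c] by auto
    show "1 \<le> ?T c \<and> ?T c \<le> n" if "c \<in> Y - {(i, Suc j)}" for c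
      using that I0(3)[of c] I0(3)[of "(i, Suc j)"] r by auto
  next
    fix a b assume 1: "(a, b) \<in> Y - {(i, Suc j)}" and 2: "(a, Suc b) \<in> Y - {(i, Suc j)}"
    show "?T (a, b) \<le> ?T (a, Suc b)"
    proof (cases "(a, b) = (i, j)")
      case True
      then show ?thesis using 2 by auto
    next
      case F1: False
      show ?thesis
      proof (cases "(a, Suc b) = (i, j)")
        case True
        then have ab: "a = i" "j = Suc b" by auto
        have "T (i, b) \<le> T (i, Suc j)" using I0(7)[of i b] r ab by auto
        then show ?thesis using ab by auto
      next
        case False
        then show ?thesis using F1 1 2 I0(4)[of a b] by auto
      qed
    qed
  next
    fix a b assume 1: "(a, b) \<in> Y - {(i, Suc j)}" and 2: "(Suc a, b) \<in> Y - {(i, Suc j)}"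
    show "?T (a, b) < ?T (Suc a, b)"
    proof (cases "(a, b) = (i, j)")
      case True
      then show ?thesis using 2 ch by auto
    next
      case F1: False
      show ?thesis
      proof (cases "(Suc a, b) = (i, j)")
        case True
        then have ab: "i = Suc a" "b = j" by auto
        have aY: "(a, Suc j) \<in> Y" using D[OF r, of a "Suc j"] ab by simp
        have "T (a, j) \<le> T (a, Suc j)" using I0(4)[of a j] 1 aY ab by auto
        moreover have "T (a, Suc j) < T (Suc a, Suc j)" using I0(5)[of a "Suc j"] aY r ab by auto
        ultimately show ?thesis using ab by auto
      next
        case False
        then show ?thesis using F1 1 2 I0(5)[of a b] by auto
      qed
    qed
  next
    fix a b assume ab0: "(i, Suc j) = (Suc a, b)" and 3: "(Suc (Suc a), b) \<in> Y"
    then have ab: "i = Suc a" "b = Suc j" by auto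
    have aY: "(a, Suc j) \<in> Y" using D[OF r, of a "Suc j"] ab by simp
    have "T (a, Suc j) < T (Suc a, Suc j)" using I0(5)[of a "Suc j"] aY r ab by auto
    moreover have "T (Suc a, Suc j) < T (Suc (Suc a), Suc j)" using I0(5)[of "Suc a" "Suc j"] r 3 ab by auto
    ultimately show "?T (a, b) < ?T (Suc (Suc a), b)" using ab by auto
  next
    fix a b assume ab0: "(i, Suc j) = (a, Suc b)" and 3: "(a, Suc (Suc b)) \<in> Y"
    then have ab: "a = i" "b = j" by auto
    have "T (i, Suc j) \<le> T (i, Suc (Suc j))" using I0(4)[of i "Suc j"] r 3 ab by auto
    then show "?T (a, b) \<le> ?T (a, Suc (Suc b))" using ab by auto
  qed
qed

lemma hole_filling_move_up:
  assumes dc: "down_closed Y" and I: "hole_filling Y n T (Suc i, j)"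
    and ch: "\<And>j'. j = Suc j' \<Longrightarrow> T (Suc i, j') \<le> T (i, j)"
  shows "hole_filling Y n (T((Suc i, j) := T (i, j), (i, j) := 0)) (i, j)" (is "hole_filling Y n ?T _")
proof -
  note D = down_closedD[OF dc]
  note I0 = hole_fillingD[OF I]
  have hY: "(Suc i, j) \<in> Y" by (rule I0(1))
  have u: "(i, j) \<in> Y" using D[OF hY, of i j] by simp
  show ?thesis
  proof (rule hole_fillingI)
    show "(i, j) \<in> Y" by fact
    show "?T c = 0" if "c \<notin> Y - {(i, j)}" for c
      using that hY I0(2)[of c] by auto
    show "1 \<le> ?T c \<and> ?T c \<le> n" if "c \<in> Y - {(i, j)}" for c
      using that I0(3)[of c] I0(3)[of "(i, j)"] u by auto
  next
    fix a b assume 1: "(a, b) \<in> Y - {(i, j)}" and 2: "(a, Suc b) \<in> Y - {(i, j)}"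
    show "?T (a, b) \<le> ?T (a, Suc b)"
    proof (cases "(a, b) = (Suc i, j)")
      case True
      then have ab: "a = Suc i" "b = j" by auto
      have aY: "(i, Suc j) \<in> Y" using D[of "Suc i" "Suc j" i "Suc j"] 2 ab by auto
      have "T (i, j) \<le> T (i, Suc j)" using I0(4)[of i j] u aY by auto
      moreover have "T (i, Suc j) < T (Suc i, Suc j)" using I0(5)[of i "Suc j"] aY 2 ab by auto
      ultimately show ?thesis using ab by auto
    next
      case F1: False
      show ?thesis
      proof (cases "(a, Suc b) = (Suc i, j)")
        case True
        then have ab: "a = Suc i" "j = Suc b" by auto
        then show ?thesis using ch[of b] by auto
      next
        case False
        then show ?thesis using F1 1 2 I0(4)[of a b] by auto
      qed
    qed
  next
    fix a b assume 1: "(a, b) \<in> Y - {(i, j)}" and 2: "(Suc a, b) \<in> Y - {(i, j)}"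
    show "?T (a, b) < ?T (Suc a, b)"
    proof (cases "(a, b) = (Suc i, j)")
      case True
      then show ?thesis using 2 I0(6)[of i j] by auto
    next
      case F1: False
      show ?thesis
      proof (cases "(Suc a, b) = (Suc i, j)")
        case True
        then show ?thesis using 1 by auto
      next
        case False
        then show ?thesis using F1 1 2 I0(5)[of a b] by auto
      qed
    qed
  next
    fix a b assume ab0: "(i, j) = (Suc a, b)" and 3: "(Suc (Suc a), b) \<in> Y"
    then have ab: "i = Suc a" "b = j" by auto
    have aY: "(a, j) \<in> Y" using D[OF u, of a j] ab by simp
    have "T (a, j) < T (i, j)" using I0(5)[of a j] aY u ab by auto
    then show "?T (a, b) < ?T (Suc (Suc a), b)" using ab by auto
  next
    fix a b assume ab0: "(i, j) = (a, Suc b)" and 3: "(a, Suc (Suc b)) \<in> Y"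
    then have ab: "a = i" "j = Suc b" by auto
    have bY: "(i, b) \<in> Y" using D[OF u, of i b] ab by simp
    have "T (i, b) \<le> T (i, j)" using I0(4)[of i b] bY u ab by auto
    moreover have "T (i, j) \<le> T (i, Suc j)" using I0(4)[of i j] u 3 ab by auto
    ultimately show "?T (a, b) \<le> ?T (a, Suc (Suc b))" using ab by auto
  qed
qed

lemma hole_filling_move_left:
  assumes dc: "down_closed Y" and I: "hole_filling Y n T (i, Suc j)"
    and ch: "\<And>i'. i = Suc i' \<Longrightarrow> T (i', Suc j) < T (i, j)"
  shows "hole_filling Y n (T((i, Suc j) := T (i, j), (i, j) := 0)) (i, j)" (is "hole_filling Y n ?T _")
proof -
  note D = down_closedD[OF dc]
  note I0 = hole_fillingD[OF I]
  have hY: "(i, Suc j) \<in> Y" by (rule I0(1))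
  have l: "(i, j) \<in> Y" using D[OF hY, of i j] by simp
  show ?thesis
  proof (rule hole_fillingI)
    show "(i, j) \<in> Y" by fact
    show "?T c = 0" if "c \<notin> Y - {(i, j)}" for c
      using that hY I0(2)[of c] by auto
    show "1 \<le> ?T c \<and> ?T c \<le> n" if "c \<in> Y - {(i, j)}" for c
      using that I0(3)[of c] I0(3)[of "(i, j)"] l by auto
  next
    fix a b assume 1: "(a, b) \<in> Y - {(i, j)}" and 2: "(a, Suc b) \<in> Y - {(i, j)}"
    show "?T (a, b) \<le> ?T (a, Suc b)"
    proof (cases "(a, b) = (i, Suc j)")
      case True
      then show ?thesis using 2 I0(7)[of i j] by auto
    next
      case F1: False
      show ?thesis
      proof (cases "(a, Suc b) = (i, Suc j)")
        case True
        then show ?thesis using 1 by auto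
      next
        case False
        then show ?thesis using F1 1 2 I0(4)[of a b] by auto
      qed
    qed
  next
    fix a b assume 1: "(a, b) \<in> Y - {(i, j)}" and 2: "(Suc a, b) \<in> Y - {(i, j)}"
    show "?T (a, b) < ?T (Suc a, b)"
    proof (cases "(a, b) = (i, Suc j)")
      case True
      then have ab: "a = i" "b = Suc j" by auto
      have aY: "(Suc i, j) \<in> Y" using D[of "Suc i" "Suc j" "Suc i" j] 2 ab by auto
      have "T (i, j) < T (Suc i, j)" using I0(5)[of i j] l aY by auto
      moreover have "T (Suc i, j) \<le> T (Suc i, Suc j)" using I0(4)[of "Suc i" j] aY 2 ab by auto
      ultimately show ?thesis using ab by auto
    next
      case F1: False
      show ?thesis
      proof (cases "(Suc a, b) = (i, Suc j)")
        case True
        then have ab: "i = Suc a" "b = Suc j" by auto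
        then show ?thesis using ch[of a] by auto
      next
        case False
        then show ?thesis using F1 1 2 I0(5)[of a b] by auto
      qed
    qed
  next
    fix a b assume ab0: "(i, j) = (Suc a, b)" and 3: "(Suc (Suc a), b) \<in> Y"
    then have ab: "i = Suc a" "b = j" by auto
    have aY: "(a, j) \<in> Y" using D[OF l, of a j] ab by simp
    have "T (a, j) < T (i, j)" using I0(5)[of a j] aY l ab by auto
    moreover have "T (i, j) < T (Suc i, j)" using I0(5)[of i j] l 3 ab by auto
    ultimately show "?T (a, b) < ?T (Suc (Suc a), b)" using ab by auto
  next
    fix a b assume ab0: "(i, j) = (a, Suc b)" and 3: "(a, Suc (Suc b)) \<in> Y"
    then have ab: "a = i" "j = Suc b" by auto
    have bY: "(i, b) \<in> Y" using D[OF l, of i b] ab by simp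
    have "T (i, b) \<le> T (i, j)" using I0(4)[of i b] bY l ab by auto
    then show "?T (a, b) \<le> ?T (a, Suc (Suc b))" using ab by auto
  qed
qed

definition slide_out :: "(nat \<times> nat) set \<Rightarrow> (nat \<times> nat \<Rightarrow> nat) \<times> (nat \<times> nat) \<Rightarrow> (nat \<times> nat \<Rightarrow> nat) \<times> (nat \<times> nat)" where
  "slide_out Y s = (case s of (T, (i, j)) \<Rightarrow>
     if (Suc i, j) \<in> Y \<and> ((i, Suc j) \<notin> Y \<or> T (Suc i, j) \<le> T (i, Suc j))
     then (T((i, j) := T (Suc i, j), (Suc i, j) := 0), (Suc i, j))
     else if (i, Suc j) \<in> Y then (T((i, j) := T (i, Suc j), (i, Suc j) := 0), (i, Suc j))
     else s)"

definition slide_in :: "(nat \<times> nat) set \<Rightarrow> (nat \<times> nat \<Rightarrow> nat) \<times> (nat \<times> nat) \<Rightarrow> (nat \<times> nat \<Rightarrow> nat) \<times> (nat \<times> nat)" where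
  "slide_in Y s = (case s of (T, (i, j)) \<Rightarrow>
     if i = 0 \<and> j = 0 then s
     else if j = 0 \<or> (i \<noteq> 0 \<and> T (i, j - 1) \<le> T (i - 1, j))
     then (T((i, j) := T (i - 1, j), (i - 1, j) := 0), (i - 1, j))
     else (T((i, j) := T (i, j - 1), (i, j - 1) := 0), (i, j - 1)))"

lemma slide_out_down:
  "(Suc i, j) \<in> Y \<Longrightarrow> ((i, Suc j) \<in> Y \<Longrightarrow> T (Suc i, j) \<le> T (i, Suc j)) \<Longrightarrow>
   slide_out Y (T, (i, j)) = (T((i, j) := T (Suc i, j), (Suc i, j) := 0), (Suc i, j))"
  unfolding slide_out_def by auto

lemma slide_out_right:
  "(i, Suc j) \<in> Y \<Longrightarrow> ((Suc i, j) \<in> Y \<Longrightarrow> T (i, Suc j) < T (Suc i, j)) \<Longrightarrow>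
   slide_out Y (T, (i, j)) = (T((i, j) := T (i, Suc j), (i, Suc j) := 0), (i, Suc j))"
  unfolding slide_out_def by auto

lemma slide_out_stop:
  "(Suc i, j) \<notin> Y \<Longrightarrow> (i, Suc j) \<notin> Y \<Longrightarrow> slide_out Y (T, (i, j)) = (T, (i, j))"
  unfolding slide_out_def by auto

lemma slide_in_up:
  "(\<And>j'. j = Suc j' \<Longrightarrow> T (Suc i, j') \<le> T (i, j)) \<Longrightarrow>
   slide_in Y (T, (Suc i, j)) = (T((Suc i, j) := T (i, j), (i, j) := 0), (i, j))"
  unfolding slide_in_def by (cases j) auto

lemma slide_in_left:
  "(\<And>i'. i = Suc i' \<Longrightarrow> T (i', Suc j) < T (i, j)) \<Longrightarrow>
   slide_in Y (T, (i, Suc j)) = (T((i, Suc j) := T (i, j), (i, j) := 0), (i, j))"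
  unfolding slide_in_def by (cases i) (auto simp: not_le)

lemma slide_in_stop: "slide_in Y (T, (0, 0)) = (T, (0, 0))"
  unfolding slide_in_def by auto

lemma slide_out_cases:
  fixes i j :: nat and Y :: "(nat \<times> nat) set" and T :: "nat \<times> nat \<Rightarrow> nat"
  obtains "(Suc i, j) \<in> Y" "(i, Suc j) \<in> Y \<Longrightarrow> T (Suc i, j) \<le> T (i, Suc j)"
  | "(i, Suc j) \<in> Y" "(Suc i, j) \<in> Y \<Longrightarrow> T (i, Suc j) < T (Suc i, j)"
  | "(Suc i, j) \<notin> Y" "(i, Suc j) \<notin> Y"
  by (cases "(Suc i, j) \<in> Y \<and> ((i, Suc j) \<in> Y \<longrightarrow> T (Suc i, j) \<le> T (i, Suc j))") (auto simp: not_le)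

lemma slide_in_cases:
  fixes i j :: nat and T :: "nat \<times> nat \<Rightarrow> nat"
  obtains "i = 0" "j = 0"
  | i' where "i = Suc i'" "\<And>j'. j = Suc j' \<Longrightarrow> T (Suc i', j') \<le> T (i', j)"
  | j' where "j = Suc j'" "\<And>i'. i = Suc i' \<Longrightarrow> T (i', Suc j') < T (i, j')"
proof (cases i)
  case 0
  then show ?thesis using that by (cases j) auto
next
  case (Suc i')
  show ?thesis
  proof (cases j)
    case 0 then show ?thesis using that Suc by auto
  next
    case (Suc j')
    show ?thesis
    proof (cases "T (i, j') \<le> T (i', j)")
      case True then show ?thesis using that \<open>i = Suc i'\<close> Suc by auto
    next
      case False then show ?thesis using that(3)[of j'] \<open>i = Suc i'\<close> Suc by (auto simp: not_le)
    qed
  qed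
qed

lemma slide_out_hole_filling:
  assumes "down_closed Y" "hole_filling Y n T h"
  shows "hole_filling Y n (fst (slide_out Y (T, h))) (snd (slide_out Y (T, h)))"
proof -
  obtain i j where h: "h = (i, j)" by (cases h)
  show ?thesis
    apply (rule slide_out_cases[where i=i and j=j and Y=Y and T=T])
    using assms h by (simp_all add: slide_out_down slide_out_right slide_out_stop hole_filling_move_down hole_filling_move_right)
qed

lemma slide_in_hole_filling:
  assumes "down_closed Y" "hole_filling Y n T h"
  shows "hole_filling Y n (fst (slide_in Y (T, h))) (snd (slide_in Y (T, h)))"
proof -
  obtain i j where h: "h = (i, j)" by (cases h)
  show ?thesis
    apply (rule slide_in_cases[where i=i and j=j and T=T])
    using assms h by (simp_all add: slide_in_up slide_in_left slide_in_stop hole_filling_move_up hole_filling_move_left)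
qed

lemma slide_in_slide_out:
  assumes dc: "down_closed Y" and I: "hole_filling Y n T h" and nc: "\<not> removable_corner Y h"
  shows "slide_in Y (slide_out Y (T, h)) = (T, h)"
proof -
  obtain i j where h: "h = (i, j)" by (cases h)
  note I0 = hole_fillingD[OF I[unfolded h]]
  note D = down_closedD[OF dc]
  have T0: "T (i, j) = 0" using I0(2) by auto
  show ?thesis
  proof (rule slide_out_cases[where i=i and j=j and Y=Y and T=T])
    assume d: "(Suc i, j) \<in> Y" and ch: "(i, Suc j) \<in> Y \<Longrightarrow> T (Suc i, j) \<le> T (i, Suc j)"
    have "T (Suc i, j') \<le> T (Suc i, j)" if "j = Suc j'" for j'
      using I0(4)[of "Suc i" j'] D[OF d, of "Suc i" j'] d that by auto
    then show ?thesis using d ch h T0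
      by (simp add: slide_out_down slide_in_up fun_eq_iff)
  next
    assume r: "(i, Suc j) \<in> Y" and ch: "(Suc i, j) \<in> Y \<Longrightarrow> T (i, Suc j) < T (Suc i, j)"
    have "T (i', Suc j) < T (i, Suc j)" if "i = Suc i'" for i'
      using I0(5)[of i' "Suc j"] D[OF r, of i' "Suc j"] r that by auto
    then show ?thesis using r ch h T0
      by (simp add: slide_out_right slide_in_left fun_eq_iff)
  next
    assume "(Suc i, j) \<notin> Y" "(i, Suc j) \<notin> Y"
    then show ?thesis using nc I0(1) h unfolding removable_corner_def by auto
  qed
qed

lemma slide_out_slide_in:
  assumes dc: "down_closed Y" and I: "hole_filling Y n T h" and nz: "h \<noteq> (0, 0)"
  shows "slide_out Y (slide_in Y (T, h)) = (T, h)"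
proof -
  obtain i j where h: "h = (i, j)" by (cases h)
  note I0 = hole_fillingD[OF I[unfolded h]]
  note D = down_closedD[OF dc]
  have T0: "T (i, j) = 0" using I0(2) by auto
  show ?thesis
  proof (rule slide_in_cases[where i=i and j=j and T=T])
    assume "i = 0" "j = 0" then show ?thesis using nz h by simp
  next
    fix i' assume i: "i = Suc i'" and ch: "\<And>j'. j = Suc j' \<Longrightarrow> T (Suc i', j') \<le> T (i', j)"
    have hY: "(Suc i', j) \<in> Y" using I0(1) i by simp
    have "T (i', j) \<le> T (i', Suc j)" if "(i', Suc j) \<in> Y"
      using I0(4)[of i' j] D[OF hY, of i' j] that i by auto
    then show ?thesis using i ch h T0 hY
      by (simp add: slide_out_down slide_in_up fun_eq_iff)
  next
    fix j' assume j: "j = Suc j'" and ch: "\<And>i'. i = Suc i' \<Longrightarrow> T (i', Suc j') < T (i, j')"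
    have hY: "(i, Suc j') \<in> Y" using I0(1) j by simp
    have "T (i, j') < T (Suc i, j')" if "(Suc i, j') \<in> Y"
      using I0(5)[of i j'] D[OF hY, of i j'] that j by auto
    then show ?thesis using j ch h T0 hY
      by (simp add: slide_out_right slide_in_left fun_eq_iff)
  qed
qed

lemma slide_out_distance:
  assumes "h \<in> Y" "\<not> removable_corner Y h"
  shows "fst (snd (slide_out Y (T, h))) + snd (snd (slide_out Y (T, h))) = Suc (fst h + snd h)"
  using assms unfolding slide_out_def removable_corner_def by (cases h) auto

lemma slide_in_distance:
  assumes "h \<noteq> (0, 0)"
  shows "Suc (fst (snd (slide_in Y (T, h))) + snd (snd (slide_in Y (T, h)))) = fst h + snd h"
  using assms unfolding slide_in_def by (cases h) auto

lemma slide_out_at_corner: "removable_corner Y h \<Longrightarrow> slide_out Y (T, h) = (T, h)"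
  unfolding removable_corner_def by (cases h) (simp add: slide_out_stop)

abbreviation hole_state :: "(nat \<times> nat) set \<Rightarrow> nat \<Rightarrow> (nat \<times> nat \<Rightarrow> nat) \<times> (nat \<times> nat) \<Rightarrow> bool" where
  "hole_state Y n s \<equiv> hole_filling Y n (fst s) (snd s)"

lemma slide_out_hole_state: "down_closed Y \<Longrightarrow> hole_state Y n s \<Longrightarrow> hole_state Y n (slide_out Y s)"
  using slide_out_hole_filling[of Y n "fst s" "snd s"] by simp

lemma slide_in_hole_state: "down_closed Y \<Longrightarrow> hole_state Y n s \<Longrightarrow> hole_state Y n (slide_in Y s)"
  using slide_in_hole_filling[of Y n "fst s" "snd s"] by simp

lemma slide_out_iter_hole_state: "down_closed Y \<Longrightarrow> hole_state Y n s \<Longrightarrow> hole_state Y n ((slide_out Y ^^ k) s)"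
  by (induction k) (auto intro: slide_out_hole_state)

lemma slide_in_iter_hole_state: "down_closed Y \<Longrightarrow> hole_state Y n s \<Longrightarrow> hole_state Y n ((slide_in Y ^^ k) s)"
  by (induction k) (auto intro: slide_in_hole_state)

lemma slide_out_iter_progress:
  assumes "down_closed Y" "hole_state Y n s"
  shows "removable_corner Y (snd ((slide_out Y ^^ k) s)) \<or>
    fst (snd ((slide_out Y ^^ k) s)) + snd (snd ((slide_out Y ^^ k) s)) = fst (snd s) + snd (snd s) + k"
proof (induction k)
  case 0 then show ?case by simp
next
  case (Suc k)
  define t where "t = (slide_out Y ^^ k) s"
  have It: "hole_state Y n t" unfolding t_def using slide_out_iter_hole_state assms by blast
  have ht: "snd t \<in> Y" using It hole_fillingD(1) by blast
  have eq: "(slide_out Y ^^ Suc k) s = slide_out Y t" by (simp add: t_def)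
  show ?case
  proof (cases "removable_corner Y (snd t)")
    case True
    then have "slide_out Y t = t" using slide_out_at_corner[of Y "snd t" "fst t"] by simp
    then show ?thesis using True eq by simp
  next
    case False
    then have "fst (snd (slide_out Y t)) + snd (snd (slide_out Y t)) = Suc (fst (snd t) + snd (snd t))"
      using slide_out_distance[of "snd t" Y "fst t"] ht by simp
    then show ?thesis using Suc.IH eq False unfolding t_def by auto
  qed
qed

lemma slide_in_iter_progress:
  shows "snd ((slide_in Y ^^ k) s) = (0, 0) \<or>
    fst (snd ((slide_in Y ^^ k) s)) + snd (snd ((slide_in Y ^^ k) s)) + k = fst (snd s) + snd (snd s)"
proof (induction k)
  case 0 then show ?case by simp
next
  case (Suc k)
  define t where "t = (slide_in Y ^^ k) s"
  have eq: "(slide_in Y ^^ Suc k) s = slide_in Y t" by (simp add: t_def)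
  show ?case
  proof (cases "snd t = (0, 0)")
    case True
    then have "slide_in Y t = t" using slide_in_stop[of Y "fst t"] by (metis prod.collapse)
    then show ?thesis using True eq by simp
  next
    case False
    then have "Suc (fst (snd (slide_in Y t)) + snd (snd (slide_in Y t))) = fst (snd t) + snd (snd t)"
      using slide_in_distance[of "snd t" Y "fst t"] by simp
    then show ?thesis using Suc.IH eq False unfolding t_def by auto
  qed
qed

lemma slide_in_iter_inverse:
  assumes dc: "down_closed Y" and I: "hole_state Y n s" and s0: "snd s = (0, 0)"
  shows "(slide_in Y ^^ k) ((slide_out Y ^^ k) s) = s"
proof (induction k)
  case 0 then show ?case by simp
next
  case (Suc k)
  define t where "t = (slide_out Y ^^ k) s"
  have It: "hole_state Y n t" unfolding t_def using slide_out_iter_hole_state assms by blast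
  have eq: "(slide_out Y ^^ Suc k) s = slide_out Y t" by (simp add: t_def)
  show ?case
  proof (cases "removable_corner Y (snd t)")
    case True
    then have "slide_out Y t = t" using slide_out_at_corner[of Y "snd t" "fst t"] by simp
    moreover have "slide_in Y s = s" using s0 slide_in_stop[of Y "fst s"] by (metis prod.collapse)
    ultimately show ?thesis using eq Suc.IH unfolding t_def by simp
  next
    case False
    have "slide_in Y (slide_out Y t) = t"
      using slide_in_slide_out[of Y n "fst t" "snd t"] dc It False by simp
    then show ?thesis using eq Suc.IH unfolding t_def by (simp add: funpow_Suc_right del: funpow.simps)
  qed
qed

lemma slide_out_iter_inverse:
  assumes dc: "down_closed Y" and I: "hole_state Y n s" and s0: "removable_corner Y (snd s)"
  shows "(slide_out Y ^^ k) ((slide_in Y ^^ k) s) = s"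
proof (induction k)
  case 0 then show ?case by simp
next
  case (Suc k)
  define t where "t = (slide_in Y ^^ k) s"
  have It: "hole_state Y n t" unfolding t_def using slide_in_iter_hole_state assms by blast
  have eq: "(slide_in Y ^^ Suc k) s = slide_in Y t" by (simp add: t_def)
  show ?case
  proof (cases "snd t = (0, 0)")
    case True
    then have "slide_in Y t = t" using slide_in_stop[of Y "fst t"] by (metis prod.collapse)
    moreover have "slide_out Y s = s" using s0 slide_out_at_corner[of Y "snd s" "fst s"] by simp
    ultimately show ?thesis using eq Suc.IH unfolding t_def by simp
  next
    case False
    have "slide_out Y (slide_in Y t) = t"
      using slide_out_slide_in[of Y n "fst t" "snd t"] dc It False by simp
    then show ?thesis using eq Suc.IH unfolding t_def by (simp add: funpow_Suc_right del: funpow.simps)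
  qed
qed

lemma slide_out_entry_count:
  assumes "finite Y" "hole_state Y n s"
  shows "entry_count Y (fst (slide_out Y s)) m = entry_count Y (fst s) m"
proof -
  obtain T i j where s: "s = (T, (i, j))" by (metis prod.collapse)
  have I: "hole_filling Y n T (i, j)" using assms(2) s by simp
  have hY: "(i, j) \<in> Y" using hole_fillingD(1)[OF I] .
  have T0: "T (i, j) = 0" using hole_fillingD(2)[OF I] by auto
  show ?thesis
    apply (rule slide_out_cases[where i=i and j=j and Y=Y and T=T])
    using s hY T0 assms(1) by (simp_all add: slide_out_down slide_out_right slide_out_stop entry_count_move)
qed

lemma slide_in_entry_count:
  assumes "finite Y" "down_closed Y" "hole_state Y n s"
  shows "entry_count Y (fst (slide_in Y s)) m = entry_count Y (fst s) m"
proof -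
  obtain T i j where s: "s = (T, (i, j))" by (metis prod.collapse)
  have I: "hole_filling Y n T (i, j)" using assms(3) s by simp
  have hY: "(i, j) \<in> Y" using hole_fillingD(1)[OF I] .
  have T0: "T (i, j) = 0" using hole_fillingD(2)[OF I] by auto
  note D = down_closedD[OF assms(2) hY]
  show ?thesis
    apply (rule slide_in_cases[where i=i and j=j and T=T])
    using s hY T0 assms(1) D by (auto simp add: slide_in_up slide_in_left slide_in_stop entry_count_move)
qed

lemma slide_out_iter_entry_count: "finite Y \<Longrightarrow> down_closed Y \<Longrightarrow> hole_state Y n s \<Longrightarrow> entry_count Y (fst ((slide_out Y ^^ k) s)) m = entry_count Y (fst s) m"
proof (induction k)
  case (Suc k)
  then show ?case using slide_out_entry_count[of Y n "(slide_out Y ^^ k) s" m] slide_out_iter_hole_state[of Y n s k] by simp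
qed simp

lemma slide_in_iter_entry_count: "finite Y \<Longrightarrow> down_closed Y \<Longrightarrow> hole_state Y n s \<Longrightarrow> entry_count Y (fst ((slide_in Y ^^ k) s)) m = entry_count Y (fst s) m"
proof (induction k)
  case (Suc k)
  then show ?case using slide_in_entry_count[of Y n "(slide_in Y ^^ k) s" m] slide_in_iter_hole_state[of Y n s k] by simp
qed simp

text \<open>For \<open>h\<close> the origin or a removable corner, the semistandard fillings of \<open>Y - {h}\<close> are
  exactly the states satisfying the slide invariant with hole \<open>h\<close> and the given content: the
  conditions across the hole are then vacuous.\<close>
lemma ssyt_on_minus_iff_hole_filling:
  assumes dc: "down_closed Y" and hY: "h \<in> Y" and hc: "h = (0, 0) \<or> removable_corner Y h"
  shows "T \<in> ssyt_on (Y - {h}) \<alpha> \<longleftrightarrow>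
    hole_filling Y (length \<alpha>) T h \<and> (\<forall>k<length \<alpha>. entry_count Y T k = \<alpha> ! k)"
proof -
  have no_bridge: "\<not> (h = (Suc i, j) \<and> (Suc (Suc i), j) \<in> Y)" "\<not> (h = (i, Suc j) \<and> (i, Suc (Suc j)) \<in> Y)"
    for i j using hc down_closedD[OF dc, of "Suc (Suc i)" j "Suc i" j]
      down_closedD[OF dc, of i "Suc (Suc j)" i "Suc j"] unfolding removable_corner_def by auto
  have count: "card {c \<in> Y - {h}. T c = Suc k} = entry_count Y T k" if "T h = 0" for k
  proof -
    have "{c \<in> Y - {h}. T c = Suc k} = {c \<in> Y. T c = Suc k}" using that by auto
    then show ?thesis unfolding entry_count_def by simp
  qed
  show ?thesis
    unfolding ssyt_on_def hole_filling_def using no_bridge hY count by (auto simp del: split_paired_All)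
qed

text \<open>A bound on the number of steps any slide path in \<open>Y\<close> can take.\<close>
definition slide_bound :: "(nat \<times> nat) set \<Rightarrow> nat" where
  "slide_bound Y = Suc (Max ((\<lambda>c. fst c + snd c) ` Y))"

lemma slide_bound_gt: "finite Y \<Longrightarrow> c \<in> Y \<Longrightarrow> fst c + snd c < slide_bound Y"
  unfolding slide_bound_def by (simp add: le_imp_less_Suc)

definition slide_out_full :: "(nat \<times> nat) set \<Rightarrow> (nat \<times> nat \<Rightarrow> nat) \<Rightarrow> (nat \<times> nat \<Rightarrow> nat) \<times> (nat \<times> nat)" where
  "slide_out_full Y T = (slide_out Y ^^ slide_bound Y) (T, (0, 0))"

definition slide_in_full :: "(nat \<times> nat) set \<Rightarrow> nat \<times> nat \<Rightarrow> (nat \<times> nat \<Rightarrow> nat) \<Rightarrow> (nat \<times> nat \<Rightarrow> nat) \<times> (nat \<times> nat)" where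
  "slide_in_full Y c T = (slide_in Y ^^ slide_bound Y) (T, c)"

lemma slide_out_full_corner:
  assumes "finite Y" "down_closed Y" "hole_state Y n (T, (0, 0))"
  shows "removable_corner Y (snd (slide_out_full Y T))"
proof -
  have "hole_state Y n (slide_out_full Y T)"
    unfolding slide_out_full_def using slide_out_iter_hole_state assms by blast
  then have "fst (snd (slide_out_full Y T)) + snd (snd (slide_out_full Y T)) < slide_bound Y"
    using slide_bound_gt[OF assms(1)] hole_fillingD(1) by blast
  then show ?thesis
    using slide_out_iter_progress[OF assms(2,3), of "slide_bound Y"] unfolding slide_out_full_def by auto
qed

lemma slide_in_full_origin:
  assumes "finite Y" "hole_state Y n (T, c)"
  shows "snd (slide_in_full Y c T) = (0, 0)"
proof -
  have "fst c + snd c < slide_bound Y"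
    using slide_bound_gt[OF assms(1)] hole_fillingD(1)[OF assms(2)] by simp
  then show ?thesis
    using slide_in_iter_progress[where k = "slide_bound Y" and Y = Y and s = "(T, c)"]
    unfolding slide_in_full_def by auto
qed

lemma slide_in_full_slide_out_full:
  assumes "down_closed Y" "hole_state Y n (T, (0, 0))"
  shows "slide_in_full Y (snd (slide_out_full Y T)) (fst (slide_out_full Y T)) = (T, (0, 0))"
  using slide_in_iter_inverse[OF assms] unfolding slide_in_full_def slide_out_full_def by simp

lemma slide_out_full_slide_in_full:
  assumes "finite Y" "down_closed Y" "removable_corner Y c" "hole_state Y n (T, c)"
  shows "slide_out_full Y (fst (slide_in_full Y c T)) = (T, c)"
proof -
  have "snd (slide_in_full Y c T) = (0, 0)" using slide_in_full_origin[OF assms(1,4)] .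
  then have "slide_out_full Y (fst (slide_in_full Y c T)) = (slide_out Y ^^ slide_bound Y) (slide_in_full Y c T)"
    unfolding slide_out_full_def by (metis prod.collapse)
  also have "\<dots> = (T, c)"
    unfolding slide_in_full_def using slide_out_iter_inverse[OF assms(2,4)] assms(3) by simp
  finally show ?thesis .
qed

lemma slide_out_full_invariants:
  assumes "finite Y" "down_closed Y" "hole_state Y n (T, (0, 0))"
  shows "hole_state Y n (slide_out_full Y T)"
    and "entry_count Y (fst (slide_out_full Y T)) k = entry_count Y T k"
  using slide_out_iter_hole_state[OF assms(2,3)] slide_out_iter_entry_count[OF assms]
  unfolding slide_out_full_def by simp_all

lemma slide_in_full_invariants:
  assumes "finite Y" "down_closed Y" "hole_state Y n (T, c)"
  shows "hole_state Y n (slide_in_full Y c T)"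
    and "entry_count Y (fst (slide_in_full Y c T)) k = entry_count Y T k"
  using slide_in_iter_hole_state[OF assms(2,3)] slide_in_iter_entry_count[OF assms]
  unfolding slide_in_full_def by simp_all

lemma jeu_de_taquin_bij:
  assumes fin: "finite Y" and dc: "down_closed Y" and o0: "(0, 0) \<in> Y"
  shows "bij_betw (\<lambda>T. (snd (slide_out_full Y T), fst (slide_out_full Y T)))
           (ssyt_on (Y - {(0, 0)}) \<alpha>) (SIGMA c:{c. removable_corner Y c}. ssyt_on (Y - {c}) \<alpha>)"
    (is "bij_betw ?f ?A ?C")
proof (rule bij_betw_byWitness[where f' = "\<lambda>(c, T). fst (slide_in_full Y c T)"])
  define n where "n = length \<alpha>"
  have A_iff: "T \<in> ?A \<longleftrightarrow> hole_state Y n (T, (0, 0)) \<and> (\<forall>k<n. entry_count Y T k = \<alpha> ! k)" for T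
    unfolding n_def using ssyt_on_minus_iff_hole_filling[OF dc o0] by simp
  have C_iff: "(c, T) \<in> ?C \<longleftrightarrow>
      removable_corner Y c \<and> hole_state Y n (T, c) \<and> (\<forall>k<n. entry_count Y T k = \<alpha> ! k)" for c T
    unfolding n_def using ssyt_on_minus_iff_hole_filling[OF dc _ disjI2, of c T \<alpha>]
    by (auto simp: removable_corner_def)
  show "\<forall>T\<in>?A. (\<lambda>(c, T). fst (slide_in_full Y c T)) (?f T) = T"
  proof
    fix T assume "T \<in> ?A"
    then have "hole_state Y n (T, (0, 0))" using A_iff by blast
    from slide_in_full_slide_out_full[OF dc this]
    show "(\<lambda>(c, T). fst (slide_in_full Y c T)) (?f T) = T" by simp
  qed
  show "\<forall>b\<in>?C. ?f ((\<lambda>(c, T). fst (slide_in_full Y c T)) b) = b"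
  proof
    fix b assume "b \<in> ?C"
    then obtain c T where b: "b = (c, T)" "removable_corner Y c" "hole_state Y n (T, c)"
      using C_iff by (cases b) auto
    from slide_out_full_slide_in_full[OF fin dc b(2,3)]
    show "?f ((\<lambda>(c, T). fst (slide_in_full Y c T)) b) = b" using b(1) by simp
  qed
  show "?f ` ?A \<subseteq> ?C"
  proof
    fix b assume "b \<in> ?f ` ?A"
    then obtain T where T: "b = ?f T" "hole_state Y n (T, (0, 0))" "\<forall>k<n. entry_count Y T k = \<alpha> ! k"
      using A_iff by auto
    show "b \<in> ?C" unfolding T(1) C_iff
      using slide_out_full_corner[OF fin dc T(2)] slide_out_full_invariants[OF fin dc T(2)] T(3) by simp
  qed
  show "(\<lambda>(c, T). fst (slide_in_full Y c T)) ` ?C \<subseteq> ?A"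
  proof
    fix T' assume "T' \<in> (\<lambda>(c, T). fst (slide_in_full Y c T)) ` ?C"
    then obtain c T where T': "T' = fst (slide_in_full Y c T)" and cT: "(c, T) \<in> ?C" by auto
    from cT have T: "T' = fst (slide_in_full Y c T)" "hole_state Y n (T, c)"
      "\<forall>k<n. entry_count Y T k = \<alpha> ! k"
      using T' C_iff by blast+
    have "hole_state Y n (T', (0, 0))"
      using slide_in_full_invariants(1)[OF fin dc T(2)] slide_in_full_origin[OF fin T(2)]
      unfolding T(1) by (metis prod.collapse)
    then show "T' \<in> ?A" unfolding A_iff T(1) using slide_in_full_invariants(2)[OF fin dc T(2)] T(3) by simp
  qed
qed

lemma card_ssyt_on_minus_origin:
  assumes "finite Y" "down_closed Y" "(0, 0) \<in> Y"
  shows "card (ssyt_on (Y - {(0, 0)}) \<alpha>) = (\<Sum>c\<in>{c. removable_corner Y c}. card (ssyt_on (Y - {c}) \<alpha>))"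
proof -
  have "finite {c. removable_corner Y c}"
    using assms(1) by (rule finite_subset[rotated]) (auto simp: removable_corner_def)
  moreover have "\<forall>c\<in>{c. removable_corner Y c}. finite (ssyt_on (Y - {c}) \<alpha>)"
    using assms(1) by (simp add: finite_ssyt_on)
  ultimately show ?thesis
    using bij_betw_same_card[OF jeu_de_taquin_bij[OF assms]] card_SigmaI by metis
qed

section \<open>Straight shapes and the Kostka matrix\<close>

definition young_cells :: "nat list \<Rightarrow> (nat \<times> nat) set" where
  "young_cells \<nu> = {(i, j). i < length \<nu> \<and> j < \<nu> ! i}"

lemma skew_cells_Nil: "skew_cells \<nu> [] = young_cells \<nu>"
  unfolding skew_cells_def young_cells_def by simp

lemma skew_cells_one: "skew_cells \<nu> [1] = young_cells \<nu> - {(0, 0)}"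
  unfolding skew_cells_def young_cells_def by auto

lemma card_young_cells_rows: "card {c \<in> young_cells \<nu>. fst c < k} = sum_list (take k \<nu>)"
proof -
  have rows: "{c \<in> young_cells \<nu>. fst c < k} = (\<Union>i\<in>{..<min k (length \<nu>)}. {i} \<times> {..<\<nu> ! i})"
    unfolding young_cells_def by auto
  have "card {c \<in> young_cells \<nu>. fst c < k} = (\<Sum>i\<in>{..<min k (length \<nu>)}. card ({i} \<times> {..<\<nu> ! i}))"
    unfolding rows by (rule card_UN_disjoint) auto
  also have "\<dots> = (\<Sum>i\<in>{..<min k (length \<nu>)}. \<nu> ! i)" by simp
  also have "\<dots> = sum_list (take k \<nu>)"
    by (simp add: sum_list_sum_nth atLeast0LessThan min.commute)
  finally show ?thesis .
qed

lemma finite_young_cells: "finite (young_cells \<nu>)"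
proof -
  have "young_cells \<nu> \<subseteq> {..<length \<nu>} \<times> {..<sum_list \<nu>}"
    unfolding young_cells_def using elem_le_sum_list by fastforce
  then show ?thesis by (rule finite_subset) auto
qed

lemma card_young_cells: "card (young_cells \<nu>) = sum_list \<nu>"
proof -
  have "{c \<in> young_cells \<nu>. fst c < length \<nu>} = young_cells \<nu>" unfolding young_cells_def by auto
  then show ?thesis using card_young_cells_rows[of \<nu> "length \<nu>"] by simp
qed

lemma down_closed_young_cells: "is_partition \<nu> \<Longrightarrow> down_closed (young_cells \<nu>)"
  unfolding down_closed_def young_cells_def is_partition_def
  by (auto simp: sorted_wrt_iff_nth_less) (metis le_neq_implies_less less_le_trans order.strict_trans1)

lemma eq_if_partial_sums_eq:
  fixes xs ys :: "nat list"
  assumes "0 \<notin> set xs" "0 \<notin> set ys" "\<forall>k. sum_list (take k xs) = sum_list (take k ys)"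
  shows "xs = ys"
  using assms
proof (induction xs arbitrary: ys)
  case Nil
  have "sum_list ys = 0" using Nil.prems(3)[rule_format, of "length ys"] by simp
  then show ?case using Nil.prems(2) by (cases ys) auto
next
  case (Cons x xs)
  obtain y ys' where ys: "ys = y # ys'"
    using Cons.prems(1) Cons.prems(3)[rule_format, of 1] by (cases ys) auto
  have xy: "x = y" using Cons.prems(3)[rule_format, of 1] ys by simp
  have "sum_list (take k xs) = sum_list (take k ys')" for k
    using Cons.prems(3)[rule_format, of "Suc k"] ys xy by simp
  then have "xs = ys'" using Cons.IH Cons.prems(1,2) ys by simp
  then show ?case using xy ys by simp
qed

lemma young_cells_inj:
  assumes "is_partition \<nu>" "is_partition \<nu>'" "young_cells \<nu> = young_cells \<nu>'"
  shows "\<nu> = \<nu>'"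
  using assms eq_if_partial_sums_eq card_young_cells_rows unfolding is_partition_def by metis

lemma ssyt_on_row_lower_bound:
  assumes dc: "down_closed Y" and T: "T \<in> ssyt_on Y \<alpha>" and ij: "(i, j) \<in> Y"
  shows "Suc i \<le> T (i, j)"
  using ij
proof (induction i)
  case 0
  then show ?case using ssyt_onD(2)[OF T, of "(0, j)"] by simp
next
  case (Suc i)
  have "(i, j) \<in> Y" using down_closedD[OF dc Suc.prems, of i j] by simp
  then show ?case using Suc.IH ssyt_onD(4)[OF T, of i j] Suc.prems by fastforce
qed

lemma card_small_entries:
  assumes fin: "finite Y" and T: "T \<in> ssyt_on Y \<alpha>"
  shows "card {c \<in> Y. 1 \<le> T c \<and> T c \<le> k} = sum_list (take k \<alpha>)"
proof -
  have classes: "{c \<in> Y. 1 \<le> T c \<and> T c \<le> k} = (\<Union>m\<in>{..<min k (length \<alpha>)}. {c \<in> Y. T c = Suc m})"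
  proof
    show "{c \<in> Y. 1 \<le> T c \<and> T c \<le> k} \<subseteq> (\<Union>m\<in>{..<min k (length \<alpha>)}. {c \<in> Y. T c = Suc m})"
    proof
      fix c assume c: "c \<in> {c \<in> Y. 1 \<le> T c \<and> T c \<le> k}"
      then have "T c \<le> length \<alpha>" using ssyt_onD(2)[OF T, of c] by simp
      then show "c \<in> (\<Union>m\<in>{..<min k (length \<alpha>)}. {c \<in> Y. T c = Suc m})"
        using c by (auto intro!: bexI[of _ "T c - 1"])
    qed
  qed auto
  have "card {c \<in> Y. 1 \<le> T c \<and> T c \<le> k} = (\<Sum>m\<in>{..<min k (length \<alpha>)}. card {c \<in> Y. T c = Suc m})"
    unfolding classes by (rule card_UN_disjoint) (use fin in auto)
  also have "\<dots> = (\<Sum>m\<in>{..<min k (length \<alpha>)}. \<alpha> ! m)"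
    by (rule sum.cong) (auto intro: ssyt_onD(5)[OF T])
  finally show ?thesis by (simp add: sum_list_sum_nth atLeast0LessThan min.commute)
qed

text \<open>Hence a content \<open>\<alpha>\<close> admitting a semistandard tableau of shape \<open>\<nu>\<close> is dominated by \<open>\<nu>\<close>:
  entries up to \<open>k\<close> must sit in the first \<open>k\<close> rows.\<close>
lemma ssyt_content_dominated:
  assumes P: "is_partition \<nu>" and T: "T \<in> ssyt_on (young_cells \<nu>) \<alpha>"
  shows "sum_list (take k \<alpha>) \<le> sum_list (take k \<nu>)"
proof -
  have "{c \<in> young_cells \<nu>. 1 \<le> T c \<and> T c \<le> k} \<subseteq> {c \<in> young_cells \<nu>. fst c < k}"
    using ssyt_on_row_lower_bound[OF down_closed_young_cells[OF P] T] by force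
  then have "card {c \<in> young_cells \<nu>. 1 \<le> T c \<and> T c \<le> k} \<le> card {c \<in> young_cells \<nu>. fst c < k}"
    by (rule card_mono[rotated]) (simp add: finite_young_cells)
  then show ?thesis using card_small_entries[OF finite_young_cells T] card_young_cells_rows by simp
qed

lemma kostka_nonzero_dominated:
  "is_partition \<nu> \<Longrightarrow> kostka \<nu> [] \<alpha> \<noteq> 0 \<Longrightarrow> sum_list (take k \<alpha>) \<le> sum_list (take k \<nu>)"
  unfolding kostka_def ssyt_eq_ssyt_on skew_cells_Nil using ssyt_content_dominated
  by (metis card.empty ex_in_conv)

definition superstandard :: "nat list \<Rightarrow> nat \<times> nat \<Rightarrow> nat" where
  "superstandard \<nu> c = (if c \<in> young_cells \<nu> then Suc (fst c) else 0)"

lemma superstandard_ssyt: "superstandard \<nu> \<in> ssyt_on (young_cells \<nu>) \<nu>"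
proof (rule ssyt_onI)
  fix k assume k: "k < length \<nu>"
  have "{c \<in> young_cells \<nu>. superstandard \<nu> c = Suc k} = {k} \<times> {..<\<nu> ! k}"
    using k unfolding superstandard_def young_cells_def by auto
  then show "card {c \<in> young_cells \<nu>. superstandard \<nu> c = Suc k} = \<nu> ! k" by simp
qed (auto simp: superstandard_def young_cells_def)

text \<open>It is the only semistandard tableau of shape \<open>\<nu>\<close> and content \<open>\<nu>\<close>: by induction on the
  row, the \<open>\<nu>\<^sub>i\<close> entries \<open>i + 1\<close> can only fill row \<open>i\<close>.\<close>
lemma superstandard_unique:
  assumes P: "is_partition \<nu>" and T: "T \<in> ssyt_on (young_cells \<nu>) \<nu>"
  shows "T = superstandard \<nu>"
proof -
  note low = ssyt_on_row_lower_bound[OF down_closed_young_cells[OF P] T]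
  have row: "\<forall>j. (i, j) \<in> young_cells \<nu> \<longrightarrow> T (i, j) = Suc i" for i
  proof (induction i rule: less_induct)
    case (less i)
    show ?case
    proof (intro allI impI)
      fix j assume ij: "(i, j) \<in> young_cells \<nu>"
      then have il: "i < length \<nu>" unfolding young_cells_def by simp
      define V where "V = {c \<in> young_cells \<nu>. T c = Suc i}"
      define R where "R = {i} \<times> {..<\<nu> ! i}"
      have VR: "V \<subseteq> R"
      proof
        fix c assume c: "c \<in> V"
        obtain i' j' where c': "c = (i', j')" by (cases c)
        have "i' \<le> i" using low[of i' j'] c c' unfolding V_def by auto
        moreover have "\<not> i' < i" using less.IH c c' unfolding V_def by fastforce
        ultimately show "c \<in> R" using c c' unfolding V_def R_def young_cells_def by auto
      qed
      have "card V = \<nu> ! i" unfolding V_def using ssyt_onD(5)[OF T il] .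
      then have "V = R" using VR by (intro card_subset_eq) (auto simp: R_def)
      moreover have "(i, j) \<in> R" using ij unfolding R_def young_cells_def by simp
      ultimately show "T (i, j) = Suc i" unfolding V_def by blast
    qed
  qed
  show ?thesis
  proof
    fix c show "T c = superstandard \<nu> c"
      using row[of "fst c"] ssyt_onD(1)[OF T, of c] unfolding superstandard_def by (cases c) auto
  qed
qed

lemma kostka_diagonal:
  assumes "is_partition \<nu>"
  shows "kostka \<nu> [] \<nu> = 1"
proof -
  have "ssyt_on (young_cells \<nu>) \<nu> = {superstandard \<nu>}"
    using superstandard_ssyt superstandard_unique[OF assms] by blast
  then show ?thesis unfolding kostka_def ssyt_eq_ssyt_on skew_cells_Nil by simp
qed

section \<open>Uniqueness of the Schur expansion\<close>

lemma length_le_sum_list: "0 \<notin> set xs \<Longrightarrow> length xs \<le> sum_list (xs :: nat list)"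
  by (induction xs) auto

lemma finite_partitions_of: "finite (partitions_of N)"
proof -
  have "partitions_of N \<subseteq> {xs. set xs \<subseteq> {..N} \<and> length xs \<le> N}"
    unfolding partitions_of_def is_partition_def
    using length_le_sum_list member_le_sum_list by fastforce
  moreover have "finite {xs. set xs \<subseteq> {..N} \<and> length xs \<le> N}"
    by (rule finite_lists_length_le) simp
  ultimately show ?thesis by (rule finite_subset)
qed

text \<open>A linear extension of the dominance order on partitions of \<open>N\<close>: the sum of all partial
  sums.\<close>
definition dominance_weight :: "nat \<Rightarrow> nat list \<Rightarrow> nat" where
  "dominance_weight N \<nu> = (\<Sum>k\<le>N. sum_list (take k \<nu>))"

lemma dominance_weight_strict:
  assumes "\<mu> \<in> partitions_of N" "\<nu> \<in> partitions_of N" "\<mu> \<noteq> \<nu>"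
    and dom: "\<And>k. sum_list (take k \<mu>) \<le> sum_list (take k \<nu>)"
  shows "dominance_weight N \<mu> < dominance_weight N \<nu>"
proof -
  have P: "is_partition \<mu>" "is_partition \<nu>" "sum_list \<mu> = N" "sum_list \<nu> = N"
    using assms(1,2) unfolding partitions_of_def by auto
  have "length \<mu> \<le> N" "length \<nu> \<le> N"
    using P length_le_sum_list unfolding is_partition_def by metis+
  then have "sum_list (take k \<mu>) = sum_list (take k \<nu>)" if "N < k" for k
    using that P by simp
  moreover have "\<exists>k. sum_list (take k \<mu>) \<noteq> sum_list (take k \<nu>)"
    using eq_if_partial_sums_eq P assms(3) unfolding is_partition_def by blast
  ultimately obtain k where "k \<le> N" "sum_list (take k \<mu>) < sum_list (take k \<nu>)"
    using dom le_neq_implies_less not_le by metis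
  then show ?thesis
    unfolding dominance_weight_def by (intro sum_strict_mono_ex1) (use dom in auto)
qed

text \<open>The Kostka matrix \<open>(kostka \<nu> [] \<alpha>)\<close>, rows and columns indexed by partitions of \<open>N\<close>, is
  unitriangular for dominance, hence has trivial kernel: choose a dominance-maximal \<open>\<nu>\<^sub>0\<close> with
  nonzero coefficient and evaluate at \<open>\<alpha> = \<nu>\<^sub>0\<close>.\<close>
lemma kostka_matrix_injective:
  fixes d :: "nat list \<Rightarrow> int"
  assumes H: "\<forall>\<alpha>. (\<Sum>\<nu>\<in>partitions_of N. d \<nu> * int (kostka \<nu> [] \<alpha>)) = 0"
  shows "\<forall>\<nu>\<in>partitions_of N. d \<nu> = 0"
proof (rule ccontr)
  define P where "P = partitions_of N"
  define Q where "Q = {\<nu> \<in> P. d \<nu> \<noteq> 0}"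
  assume "\<not> (\<forall>\<nu>\<in>partitions_of N. d \<nu> = 0)"
  then have "finite Q" "Q \<noteq> {}" unfolding Q_def P_def using finite_partitions_of by auto
  then have "Max (dominance_weight N ` Q) \<in> dominance_weight N ` Q" by simp
  then obtain \<nu>0 where n0: "\<nu>0 \<in> Q" and M: "dominance_weight N \<nu>0 = Max (dominance_weight N ` Q)"
    by auto
  have max: "dominance_weight N \<nu> \<le> dominance_weight N \<nu>0" if "\<nu> \<in> Q" for \<nu>
    unfolding M using \<open>finite Q\<close> that by simp
  have P0: "is_partition \<nu>0" "\<nu>0 \<in> P" using n0 unfolding Q_def P_def partitions_of_def by auto
  have others: "d \<nu> * int (kostka \<nu> [] \<nu>0) = 0" if "\<nu> \<in> P - {\<nu>0}" for \<nu>
  proof (rule ccontr)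
    assume nz: "d \<nu> * int (kostka \<nu> [] \<nu>0) \<noteq> 0"
    then have "\<nu> \<in> Q" using that unfolding Q_def by auto
    moreover have "sum_list (take k \<nu>0) \<le> sum_list (take k \<nu>)" for k
      using kostka_nonzero_dominated nz that unfolding P_def partitions_of_def by auto
    ultimately show False
      using dominance_weight_strict[of \<nu>0 N \<nu>] max[of \<nu>] P0 that unfolding P_def by auto
  qed
  have "0 = (\<Sum>\<nu>\<in>P. d \<nu> * int (kostka \<nu> [] \<nu>0))" using H unfolding P_def by simp
  also have "\<dots> = d \<nu>0 * int (kostka \<nu>0 [] \<nu>0)"
    using sum.remove[OF _ P0(2)] sum.neutral[of "P - {\<nu>0}"] others finite_partitions_of
    unfolding P_def by (metis (no_types, lifting) add.right_neutral)
  also have "\<dots> = d \<nu>0" using kostka_diagonal[OF P0(1)] by simp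
  finally show False using n0 unfolding Q_def by simp
qed

lemma lr_coeff_eqI:
  assumes supp: "\<forall>\<nu>. \<nu> \<notin> partitions_of (card (skew_cells lam mu)) \<longrightarrow> c \<nu> = 0"
    and expansion: "\<forall>\<alpha>. int (kostka lam mu \<alpha>) =
      (\<Sum>\<nu>\<in>partitions_of (card (skew_cells lam mu)). c \<nu> * int (kostka \<nu> [] \<alpha>))"
  shows "lr_coeff lam mu = c"
  unfolding lr_coeff_def
proof (rule the_equality)
  show "(\<forall>\<nu>. \<nu> \<notin> partitions_of (card (skew_cells lam mu)) \<longrightarrow> c \<nu> = 0) \<and>
    (\<forall>\<alpha>. int (kostka lam mu \<alpha>) = (\<Sum>\<nu>\<in>partitions_of (card (skew_cells lam mu)). c \<nu> * int (kostka \<nu> [] \<alpha>)))"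
    using supp expansion by blast
next
  define N where "N = card (skew_cells lam mu)"
  fix c' assume c': "(\<forall>\<nu>. \<nu> \<notin> partitions_of (card (skew_cells lam mu)) \<longrightarrow> c' \<nu> = 0) \<and>
    (\<forall>\<alpha>. int (kostka lam mu \<alpha>) = (\<Sum>\<nu>\<in>partitions_of (card (skew_cells lam mu)). c' \<nu> * int (kostka \<nu> [] \<alpha>)))"
  have "(\<Sum>\<nu>\<in>partitions_of N. (c' \<nu> - c \<nu>) * int (kostka \<nu> [] \<alpha>)) = 0" for \<alpha>
    using expansion c' unfolding N_def by (simp add: left_diff_distrib sum_subtractf)
  then have "\<forall>\<nu>\<in>partitions_of N. c' \<nu> - c \<nu> = 0" by (intro kostka_matrix_injective) blast
  then show "c' = c" using supp c' unfolding N_def by fastforce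
qed

section \<open>Removing one box: \<open>s\<^bsub>\<lambda>/1\<^esub>\<close> is the sum of \<open>s\<^bsub>\<lambda> - c\<^esub>\<close> over the removable corners \<open>c\<close>\<close>

lemma kostka_minus_origin:
  assumes lam: "is_partition lam" "lam \<noteq> []"
    and S: "\<forall>\<nu>\<in>S. is_partition \<nu>"
    and cells: "young_cells ` S = (\<lambda>c. young_cells lam - {c}) ` {c. removable_corner (young_cells lam) c}"
  shows "kostka lam [1] \<alpha> = (\<Sum>\<nu>\<in>S. kostka \<nu> [] \<alpha>)"
proof -
  define Y where "Y = young_cells lam"
  define K where "K Z = card (ssyt_on Z \<alpha>)" for Z
  have o0: "(0, 0) \<in> Y"
    using lam unfolding Y_def is_partition_def young_cells_def by (cases lam) auto
  have corners_inj: "inj_on (\<lambda>c. Y - {c}) {c. removable_corner Y c}"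
  proof (rule inj_onI)
    fix c c' assume "c \<in> {c. removable_corner Y c}" "Y - {c} = Y - {c'}"
    then have "c \<in> Y" "c \<notin> Y - {c'}" unfolding removable_corner_def by auto
    then show "c = c'" by blast
  qed
  have "kostka lam [1] \<alpha> = K (Y - {(0, 0)})"
    unfolding kostka_def ssyt_eq_ssyt_on skew_cells_one K_def Y_def ..
  also have "\<dots> = (\<Sum>c\<in>{c. removable_corner Y c}. K (Y - {c}))"
    unfolding K_def Y_def
    by (rule card_ssyt_on_minus_origin[OF finite_young_cells down_closed_young_cells[OF lam(1)] o0[unfolded Y_def]])
  also have "\<dots> = (\<Sum>Z\<in>young_cells ` S. K Z)"
    unfolding cells Y_def[symmetric] by (simp add: sum.reindex[OF corners_inj])
  also have "\<dots> = (\<Sum>\<nu>\<in>S. K (young_cells \<nu>))"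
    using S young_cells_inj by (simp add: sum.reindex inj_on_def)
  finally show ?thesis unfolding K_def kostka_def ssyt_eq_ssyt_on skew_cells_Nil .
qed

theorem lr_coeff_minus_origin:
  assumes lam: "is_partition lam" "lam \<noteq> []"
    and S: "\<forall>\<nu>\<in>S. is_partition \<nu>"
    and cells: "young_cells ` S = (\<lambda>c. young_cells lam - {c}) ` {c. removable_corner (young_cells lam) c}"
  shows "lr_coeff lam [1] = (\<lambda>\<nu>. if \<nu> \<in> S then 1 else 0)"
proof (rule lr_coeff_eqI)
  define N where "N = card (skew_cells lam [1])"
  have "(0, 0) \<in> young_cells lam"
    using lam unfolding is_partition_def young_cells_def by (cases lam) auto
  then have N: "N = card (young_cells lam) - 1"
    unfolding N_def skew_cells_one using finite_young_cells by (simp add: card_Diff_singleton)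
  have S_sub: "S \<subseteq> partitions_of N"
  proof
    fix \<nu> assume "\<nu> \<in> S"
    then obtain c where "removable_corner (young_cells lam) c" "young_cells \<nu> = young_cells lam - {c}"
      using cells by (metis (no_types, lifting) image_iff mem_Collect_eq)
    then have "sum_list \<nu> = N" unfolding N card_young_cells[symmetric]
      using finite_young_cells by (simp add: card_Diff_singleton removable_corner_def)
    then show "\<nu> \<in> partitions_of N" using S \<open>\<nu> \<in> S\<close> unfolding partitions_of_def by simp
  qed
  show "\<forall>\<nu>. \<nu> \<notin> partitions_of (card (skew_cells lam [1])) \<longrightarrow> (if \<nu> \<in> S then 1 else 0) = (0 :: int)"
    using S_sub unfolding N_def by auto
  show "\<forall>\<alpha>. int (kostka lam [1] \<alpha>) =
      (\<Sum>\<nu>\<in>partitions_of (card (skew_cells lam [1])). (if \<nu> \<in> S then 1 else 0) * int (kostka \<nu> [] \<alpha>))"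
  proof
    fix \<alpha>
    have "(\<Sum>\<nu>\<in>partitions_of N. (if \<nu> \<in> S then 1 else 0) * int (kostka \<nu> [] \<alpha>))
        = (\<Sum>\<nu>\<in>partitions_of N. if \<nu> \<in> S then int (kostka \<nu> [] \<alpha>) else 0)"
      by (rule sum.cong) auto
    also have "\<dots> = (\<Sum>\<nu>\<in>partitions_of N \<inter> S. int (kostka \<nu> [] \<alpha>))"
      by (rule sum.inter_restrict[symmetric]) (rule finite_partitions_of)
    also have "partitions_of N \<inter> S = S" using S_sub by blast
    finally show "int (kostka lam [1] \<alpha>) =
      (\<Sum>\<nu>\<in>partitions_of (card (skew_cells lam [1])). (if \<nu> \<in> S then 1 else 0) * int (kostka \<nu> [] \<alpha>))"
      unfolding N_def[symmetric] kostka_minus_origin[OF assms] by simp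
  qed
qed

lemma skew_supp_indicator:
  assumes "lr_coeff lam mu = (\<lambda>\<nu>. if \<nu> \<in> S then 1 else 0)" "\<forall>\<nu>\<in>S. is_partition \<nu>"
  shows "skew_supp lam mu = conj_part ` S"
  using assms unfolding skew_supp_def by auto

section \<open>The shape \<open>(a + b + 1, (a + 1)\<^sup>x, 1\<^sup>y)\<close>\<close>

lemma nth_cons_replicate:
  "(p # replicate m q @ rest) ! i = (if i = 0 then p else if i \<le> m then q else rest ! (i - Suc m))"
  by (cases i) (auto simp: nth_append)

lemma length_filter_gt_replicate:
  "length (filter (\<lambda>p. j < p) (replicate m q)) = (if j < q then m else 0)"
  by (induction m) auto

lemma length_filter_gt_cons_replicate:
  "length (filter (\<lambda>p. j < p) (p0 # replicate m q @ rest)) =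
   (if j < p0 then 1 else 0) + (if j < q then m else 0) + length (filter (\<lambda>p. j < p) rest)"
  by (simp add: length_filter_gt_replicate)

lemma sorted_desc_replicate: "sorted_wrt (\<lambda>x y. y \<le> x) (replicate n (v::nat))"
  by (induction n) auto

lemma sort_desc_id:
  assumes "sorted_wrt (\<lambda>x y. y \<le> x) xs"
  shows "sort_desc xs = xs"
proof -
  have "sorted (rev xs)" using assms by (simp add: sorted_wrt_rev)
  then have "sort xs = rev xs" by (intro properties_for_sort) simp_all
  then show ?thesis unfolding sort_desc_def by simp
qed

lemma conj_part_eqI:
  assumes "\<nu> \<noteq> []" "length t = hd \<nu>" "\<And>j. j < hd \<nu> \<Longrightarrow> length (filter (\<lambda>p. j < p) \<nu>) = t ! j"
  shows "conj_part \<nu> = t"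
  unfolding conj_part_def using assms by (intro nth_equalityI) auto

definition hook :: "nat \<Rightarrow> nat \<Rightarrow> nat \<Rightarrow> nat \<Rightarrow> nat list" where
  "hook a x b y = (a + b + 1) # replicate x (a + 1) @ replicate y 1"

definition hook_minus_arm :: "nat \<Rightarrow> nat \<Rightarrow> nat \<Rightarrow> nat \<Rightarrow> nat list" where
  "hook_minus_arm a x b y = (a + b) # replicate x (a + 1) @ replicate y 1"

definition hook_minus_inner :: "nat \<Rightarrow> nat \<Rightarrow> nat \<Rightarrow> nat \<Rightarrow> nat list" where
  "hook_minus_inner a x b y = (a + b + 1) # replicate (x - 1) (a + 1) @ a # replicate y 1"

definition hook_minus_leg :: "nat \<Rightarrow> nat \<Rightarrow> nat \<Rightarrow> nat \<Rightarrow> nat list" where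
  "hook_minus_leg a x b y = (a + b + 1) # replicate x (a + 1) @ replicate (y - 1) 1"

definition hook_row :: "nat \<Rightarrow> nat \<Rightarrow> nat \<Rightarrow> nat \<Rightarrow> nat" where
  "hook_row a x b i = (if i = 0 then a + b + 1 else if i \<le> x then a + 1 else 1)"

context
  fixes a x b y :: nat
  assumes a1: "1 \<le> a" and x1: "1 \<le> x" and b1: "1 \<le> b" and y1: "1 \<le> y"
begin

lemma partition_hook: "is_partition (hook a x b y)"
  unfolding is_partition_def hook_def by (auto simp: sorted_wrt_append sorted_desc_replicate)

lemma partition_hook_minus_arm: "is_partition (hook_minus_arm a x b y)"
  unfolding is_partition_def hook_minus_arm_def using b1 by (auto simp: sorted_wrt_append sorted_desc_replicate)

lemma partition_hook_minus_inner: "is_partition (hook_minus_inner a x b y)"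
  unfolding is_partition_def hook_minus_inner_def using a1 by (auto simp: sorted_wrt_append sorted_desc_replicate)

lemma partition_hook_minus_leg: "is_partition (hook_minus_leg a x b y)"
  unfolding is_partition_def hook_minus_leg_def by (auto simp: sorted_wrt_append sorted_desc_replicate)

lemma young_cells_hook: "young_cells (hook a x b y) = {(i, j). i < Suc (x + y) \<and> j < hook_row a x b i}"
  unfolding young_cells_def hook_def hook_row_def by (auto simp: nth_cons_replicate nth_append)

lemma young_cells_minus_arm: "young_cells (hook_minus_arm a x b y) = young_cells (hook a x b y) - {(0, a + b)}"
  unfolding young_cells_hook unfolding young_cells_def hook_minus_arm_def hook_row_def by (auto simp: nth_cons_replicate nth_append)

lemma young_cells_minus_inner: "young_cells (hook_minus_inner a x b y) = young_cells (hook a x b y) - {(x, a)}"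
proof -
  have len: "length (hook_minus_inner a x b y) = Suc (x + y)" unfolding hook_minus_inner_def using x1 by simp
  have nb: "(hook_minus_inner a x b y) ! i = (if i = x then a else hook_row a x b i)" if "i < Suc (x + y)" for i
    unfolding hook_minus_inner_def hook_row_def nth_cons_replicate using x1 that by (auto simp: nth_Cons')
  have rx: "hook_row a x b x = a + 1" using x1 by (simp add: hook_row_def)
  show ?thesis
  proof (rule set_eqI)
    fix c :: "nat \<times> nat"
    obtain i j where c: "c = (i, j)" by (cases c)
    show "c \<in> young_cells (hook_minus_inner a x b y) \<longleftrightarrow> c \<in> young_cells (hook a x b y) - {(x, a)}"
    proof (cases "i = x")
      case True then show ?thesis unfolding young_cells_hook using c len rx nb[of x] by (auto simp: young_cells_def)
    next
      case False then show ?thesis unfolding young_cells_hook using c len nb[of i] by (auto simp: young_cells_def)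
    qed
  qed
qed

lemma young_cells_minus_leg: "young_cells (hook_minus_leg a x b y) = young_cells (hook a x b y) - {(x + y, 0)}"
proof -
  have len: "length (hook_minus_leg a x b y) = x + y" unfolding hook_minus_leg_def using y1 by simp
  have nc: "(hook_minus_leg a x b y) ! i = hook_row a x b i" if "i < x + y" for i
    unfolding hook_minus_leg_def hook_row_def nth_cons_replicate using that by (auto simp: nth_append)
  have rx: "hook_row a x b (x + y) = 1" using y1 by (simp add: hook_row_def)
  show ?thesis
  proof (rule set_eqI)
    fix c :: "nat \<times> nat"
    obtain i j where c: "c = (i, j)" by (cases c)
    show "c \<in> young_cells (hook_minus_leg a x b y) \<longleftrightarrow> c \<in> young_cells (hook a x b y) - {(x + y, 0)}"
    proof (cases "i = x + y")
      case True then show ?thesis unfolding young_cells_hook using c len rx by (auto simp: young_cells_def)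
    next
      case False then show ?thesis unfolding young_cells_hook using c len nc by (auto simp: young_cells_def)
    qed
  qed
qed

lemma removable_corners_hook: "{c. removable_corner (young_cells (hook a x b y)) c} = {(0, a + b), (x, a), (x + y, 0)}"
  unfolding removable_corner_def young_cells_hook hook_row_def using a1 x1 b1 y1 by (auto split: if_splits)

lemma conj_hook_minus_arm: "conj_part (hook_minus_arm a x b y) = (x + y + 1) # replicate a (x + 1) @ replicate (b - 1) 1"
proof (rule conj_part_eqI)
  show "hook_minus_arm a x b y \<noteq> []" unfolding hook_minus_arm_def by simp
  show "length ((x + y + 1) # replicate a (x + 1) @ replicate (b - 1) 1) = hd (hook_minus_arm a x b y)"
    unfolding hook_minus_arm_def using b1 by simp
  fix j assume j: "j < hd (hook_minus_arm a x b y)"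
  then have j': "j < a + b" unfolding hook_minus_arm_def by simp
  show "length (filter (\<lambda>p. j < p) (hook_minus_arm a x b y)) = ((x + y + 1) # replicate a (x + 1) @ replicate (b - 1) 1) ! j"
    unfolding hook_minus_arm_def length_filter_gt_cons_replicate length_filter_gt_replicate nth_cons_replicate using j' by (auto simp: nth_append)
qed

lemma conj_hook_minus_inner: "conj_part (hook_minus_inner a x b y) = (x + y + 1) # replicate (a - 1) (x + 1) @ x # replicate b 1"
proof (rule conj_part_eqI)
  show "hook_minus_inner a x b y \<noteq> []" unfolding hook_minus_inner_def by simp
  show "length ((x + y + 1) # replicate (a - 1) (x + 1) @ x # replicate b 1) = hd (hook_minus_inner a x b y)"
    unfolding hook_minus_inner_def using a1 by simp
  fix j assume j: "j < hd (hook_minus_inner a x b y)"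
  then have j': "j < a + b + 1" unfolding hook_minus_inner_def by simp
  show "length (filter (\<lambda>p. j < p) (hook_minus_inner a x b y)) = ((x + y + 1) # replicate (a - 1) (x + 1) @ x # replicate b 1) ! j"
    unfolding hook_minus_inner_def length_filter_gt_cons_replicate length_filter_gt_replicate nth_cons_replicate using j' a1 x1 by (auto simp: nth_append nth_Cons')
qed

lemma conj_hook_minus_leg: "conj_part (hook_minus_leg a x b y) = (x + y) # replicate a (x + 1) @ replicate b 1"
proof (rule conj_part_eqI)
  show "hook_minus_leg a x b y \<noteq> []" unfolding hook_minus_leg_def by simp
  show "length ((x + y) # replicate a (x + 1) @ replicate b 1) = hd (hook_minus_leg a x b y)"
    unfolding hook_minus_leg_def by simp
  fix j assume j: "j < hd (hook_minus_leg a x b y)"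
  then have j': "j < a + b + 1" unfolding hook_minus_leg_def by simp
  show "length (filter (\<lambda>p. j < p) (hook_minus_leg a x b y)) = ((x + y) # replicate a (x + 1) @ replicate b 1) ! j"
    unfolding hook_minus_leg_def length_filter_gt_cons_replicate length_filter_gt_replicate nth_cons_replicate using j' y1 by (auto simp: nth_append)
qed

lemma lr_coeff_hook:
  "lr_coeff (hook a x b y) [1] =
    (\<lambda>\<nu>. if \<nu> \<in> {hook_minus_arm a x b y, hook_minus_inner a x b y, hook_minus_leg a x b y} then 1 else 0)"
proof (rule lr_coeff_minus_origin)
  show "is_partition (hook a x b y)" by (rule partition_hook)
  show "hook a x b y \<noteq> []" by (simp add: hook_def)
  show "\<forall>\<nu>\<in>{hook_minus_arm a x b y, hook_minus_inner a x b y, hook_minus_leg a x b y}. is_partition \<nu>"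
    using partition_hook_minus_arm partition_hook_minus_inner partition_hook_minus_leg by simp
  show "young_cells ` {hook_minus_arm a x b y, hook_minus_inner a x b y, hook_minus_leg a x b y} =
      (\<lambda>c. young_cells (hook a x b y) - {c}) ` {c. removable_corner (young_cells (hook a x b y)) c}"
    by (simp add: removable_corners_hook young_cells_minus_arm young_cells_minus_inner young_cells_minus_leg)
qed

lemma skew_supp_hook:
  "skew_supp (hook a x b y) [1] = {(x + y + 1) # replicate a (x + 1) @ replicate (b - 1) 1,
     (x + y + 1) # replicate (a - 1) (x + 1) @ x # replicate b 1, (x + y) # replicate a (x + 1) @ replicate b 1}"
  using skew_supp_indicator[OF lr_coeff_hook] partition_hook_minus_arm partition_hook_minus_inner
    partition_hook_minus_leg conj_hook_minus_arm conj_hook_minus_inner conj_hook_minus_leg by simp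

lemma hd_hook: "hd (hook a x b y) = a + b + 1" "hook a x b y \<noteq> []"
  unfolding hook_def by simp_all

lemma hook_column_count:
  "j < a + b + 1 \<Longrightarrow>
   card {i. (i, j) \<in> skew_cells (hook a x b y) [1]} = ((x + y) # replicate a (x + 1) @ replicate b 1) ! j"
proof -
  assume j: "j < a + b + 1"
  have S: "{i. (i, j) \<in> skew_cells (hook a x b y) [1]} = {i. i < Suc (x + y) \<and> j < hook_row a x b i \<and> (i, j) \<noteq> (0, 0)}"
    unfolding skew_cells_one young_cells_hook by auto
  show ?thesis
  proof (cases "j = 0")
    case True
    have "{i. i < Suc (x + y) \<and> j < hook_row a x b i \<and> (i, j) \<noteq> (0, 0)} = {1..x + y}"
      using True by (auto simp: hook_row_def)
    then show ?thesis unfolding S using True by simp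
  next
    case False
    show ?thesis
    proof (cases "j \<le> a")
      case True
      have "{i. i < Suc (x + y) \<and> j < hook_row a x b i \<and> (i, j) \<noteq> (0, 0)} = {..x}"
        using True False by (auto simp: hook_row_def)
      then show ?thesis unfolding S using True False by (simp add: nth_cons_replicate)
    next
      case F2: False
      have "{i. i < Suc (x + y) \<and> j < hook_row a x b i \<and> (i, j) \<noteq> (0, 0)} = {0}"
        using F2 False j by (auto simp: hook_row_def)
      then show ?thesis unfolding S using F2 False j by (simp add: nth_cons_replicate nth_append)
    qed
  qed
qed

lemma skew_w_hook: "skew_w (hook a x b y) [1] = (x + y) # replicate a (x + 1) @ replicate b 1"
proof -
  have m: "map (\<lambda>j. card {i. (i, j) \<in> skew_cells (hook a x b y) [1]}) [0..<a + b + 1] = (x + y) # replicate a (x + 1) @ replicate b 1"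
  proof (rule nth_equalityI)
    fix j assume "j < length (map (\<lambda>j. card {i. (i, j) \<in> skew_cells (hook a x b y) [1]}) [0..<a + b + 1])"
    then have j: "j < a + b + 1" by simp
    show "map (\<lambda>j. card {i. (i, j) \<in> skew_cells (hook a x b y) [1]}) [0..<a + b + 1] ! j = ((x + y) # replicate a (x + 1) @ replicate b 1) ! j"
      using nth_map_upt[of j "a + b + 1" 0] j hook_column_count[OF j] by (simp del: upt_Suc)
  qed simp
  have f: "filter (\<lambda>l. 0 < l) ((x + y) # replicate a (x + 1) @ replicate b (1::nat)) = (x + y) # replicate a (x + 1) @ replicate b 1"
    using x1 by (auto intro!: filter_True)
  have s: "sorted_wrt (\<lambda>x y. y \<le> x) ((x + y) # replicate a (x + 1) @ replicate b (1::nat))"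
    using y1 by (auto simp: sorted_wrt_append sorted_desc_replicate)
  have e: "(if hook a x b y = [] then 0 else hd (hook a x b y)) = a + b + 1" using hd_hook by simp
  show ?thesis unfolding skew_w_def e m f using sort_desc_id[OF s] by simp
qed

lemma hook_row_count: "i < length (hook a x b y) \<Longrightarrow> card {j. (i, j) \<in> skew_cells (hook a x b y) [1]} = hook_minus_arm a x b y ! i"
proof -
  assume i: "i < length (hook a x b y)"
  then have i': "i < Suc (x + y)" unfolding hook_def by simp
  have S: "{j. (i, j) \<in> skew_cells (hook a x b y) [1]} = {j. j < hook_row a x b i \<and> (i, j) \<noteq> (0, 0)}"
    unfolding skew_cells_one young_cells_hook using i' by auto
  show ?thesis
  proof (cases "i = 0")
    case True
    have "{j. j < hook_row a x b i \<and> (i, j) \<noteq> (0, 0)} = {1..a + b}" using True by (auto simp: hook_row_def)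
    then show ?thesis unfolding S hook_minus_arm_def using True by simp
  next
    case False
    have "{j. j < hook_row a x b i \<and> (i, j) \<noteq> (0, 0)} = {..<hook_row a x b i}" using False by auto
    then show ?thesis unfolding S hook_minus_arm_def using False i' by (auto simp: hook_row_def nth_cons_replicate nth_append)
  qed
qed

lemma skew_n_hook: "skew_n (hook a x b y) [1] = conj_part (hook_minus_arm a x b y)"
proof -
  have m: "map (\<lambda>i. card {j. (i, j) \<in> skew_cells (hook a x b y) [1]}) [0..<length (hook a x b y)] = hook_minus_arm a x b y"
  proof (rule nth_equalityI)
    show "length (map (\<lambda>i. card {j. (i, j) \<in> skew_cells (hook a x b y) [1]}) [0..<length (hook a x b y)]) = length (hook_minus_arm a x b y)"
      unfolding hook_def hook_minus_arm_def by simp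
    fix i assume "i < length (map (\<lambda>i. card {j. (i, j) \<in> skew_cells (hook a x b y) [1]}) [0..<length (hook a x b y)])"
    then have i: "i < length (hook a x b y)" by simp
    show "map (\<lambda>i. card {j. (i, j) \<in> skew_cells (hook a x b y) [1]}) [0..<length (hook a x b y)] ! i = hook_minus_arm a x b y ! i"
      using nth_map_upt[of i "length (hook a x b y)" 0] i hook_row_count[OF i] by (simp del: upt_Suc)
  qed
  have "\<forall>l\<in>set (hook_minus_arm a x b y). 0 < l"
    using partition_hook_minus_arm unfolding is_partition_def by (metis gr0I)
  then have f: "filter (\<lambda>l. 0 < l) (hook_minus_arm a x b y) = hook_minus_arm a x b y" by (rule filter_True)
  have s: "sorted_wrt (\<lambda>x y. y \<le> x) (hook_minus_arm a x b y)"
    using partition_hook_minus_arm unfolding is_partition_def by simp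
  show ?thesis unfolding skew_n_def m f sort_desc_id[OF s] ..
qed

lemma skew_w_n_hook:
  "skew_w (hook a x b y) [1] = (x + y) # replicate a (x + 1) @ replicate b 1"
  "skew_n (hook a x b y) [1] = (x + y + 1) # replicate a (x + 1) @ replicate (b - 1) 1"
  using skew_w_hook skew_n_hook conj_hook_minus_arm by simp_all

end

section \<open>Partitions in a narrow dominance band\<close>

lemma positive_list_sum_0: "0 \<notin> set (l :: nat list) \<Longrightarrow> sum_list l = 0 \<Longrightarrow> l = []"
  by (cases l) auto

lemma positive_list_sum_1:
  assumes "0 \<notin> set (l :: nat list)" "sum_list l = 1"
  shows "l = [1]"
proof (cases l)
  case (Cons h t)
  then have "0 \<notin> set t" "0 < h" "h + sum_list t = 1" using assms by auto
  then have "h = 1" "sum_list t = 0" by linarith+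
  then have "t = []" using positive_list_sum_0[OF \<open>0 \<notin> set t\<close>] by blast
  then show ?thesis using Cons \<open>h = 1\<close> by simp
qed (use assms in simp)

lemma sum_list_take_Suc: "k < length \<nu> \<Longrightarrow> sum_list (take (Suc k) \<nu>) = sum_list (take k \<nu>) + (\<nu> ! k :: nat)"
  by (simp add: take_Suc_conv_app_nth)

lemma eq_prefix_append_drop:
  assumes "length L = A" "A \<le> length \<nu>" "\<And>i. i < A \<Longrightarrow> \<nu> ! i = L ! i" "drop A \<nu> = R"
  shows "\<nu> = L @ R"
proof -
  have "take A \<nu> = L" using assms(1-3) by (intro nth_equalityI) auto
  then show ?thesis using assms(4) append_take_drop_id[of A \<nu>] by simp
qed

text \<open>Partitions \<open>\<nu>\<close> of \<open>A X + 1\<close> whose partial sums satisfy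
  \<open>k X \<le> \<nu>\<^sub>1 + \<dots> + \<nu>\<^sub>k \<le> k X + 1\<close> for \<open>k \<le> A\<close>: these are exactly the partitions in the dominance
  interval between \<open>(X\<^sup>A, 1)\<close> and \<open>(X + 1, X\<^sup>A\<^sup>-\<^sup>1)\<close>.  Writing \<open>\<nu>\<^sub>k = X + d\<^sub>k - d\<^sub>k\<^sub>-\<^sub>1\<close> with
  \<open>d\<^sub>k \<in> {0, 1}\<close>, monotonicity of \<open>\<nu>\<close> leaves only three possibilities.\<close>
context
  fixes X A :: nat and \<nu> :: "nat list"
  assumes X: "2 \<le> X" and A: "2 \<le> A" and P: "is_partition \<nu>"
    and total: "sum_list \<nu> = A * X + 1"
    and lower: "\<And>k. k \<le> A \<Longrightarrow> k * X \<le> sum_list (take k \<nu>)"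
    and upper: "\<And>k. 1 \<le> k \<Longrightarrow> k \<le> A \<Longrightarrow> sum_list (take k \<nu>) \<le> k * X + 1"
begin

lemma band_part_antimono: "i \<le> j \<Longrightarrow> j < length \<nu> \<Longrightarrow> \<nu> ! j \<le> \<nu> ! i"
  using P unfolding is_partition_def by (cases "i = j") (auto simp: sorted_wrt_iff_nth_less)

lemma band_length: "A \<le> length \<nu>"
proof (rule ccontr)
  assume short: "\<not> A \<le> length \<nu>"
  have "1 \<le> length \<nu>" using total by (cases \<nu>) auto
  moreover have "length \<nu> \<le> A" using short by simp
  ultimately have "sum_list (take (length \<nu>) \<nu>) \<le> length \<nu> * X + 1" by (rule upper)
  then have "A * X \<le> length \<nu> * X" using total by simp
  then show False using short X by simp
qed

lemma band_nonempty: "\<nu> \<noteq> []"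
  using band_length A by auto

lemma band_tail_sum: "sum_list (drop A \<nu>) = A * X + 1 - sum_list (take A \<nu>)"
  using total by (metis add_diff_cancel_left' append_take_drop_id sum_list_append)

lemma band_tail_positive: "0 \<notin> set (drop A \<nu>)"
  using P unfolding is_partition_def by (meson in_set_dropD)

lemma band_first_part: "\<nu> ! 0 = X \<or> \<nu> ! 0 = X + 1"
  using lower[of 1] upper[of 1] A band_nonempty by (cases \<nu>) auto

text \<open>If \<open>\<nu>\<^sub>1 = X\<close> then all parts are at most \<open>X\<close>, which forces \<open>\<nu> = (X\<^sup>A, 1)\<close>.\<close>
lemma band_first_part_low:
  assumes first: "\<nu> ! 0 = X"
  shows "\<nu> = replicate A X @ [1]"
proof -
  have le: "\<nu> ! i \<le> X" if "i < length \<nu>" for i using band_part_antimono[of 0 i] that first by simp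
  have sums: "sum_list (take k \<nu>) = k * X" if "k \<le> A" for k
  proof -
    have "sum_list (take k \<nu>) \<le> k * X" using that
    proof (induction k)
      case (Suc k)
      then show ?case using sum_list_take_Suc[of k \<nu>] le[of k] band_length by simp
    qed simp
    then show ?thesis using lower[OF that] by simp
  qed
  show ?thesis
  proof (rule eq_prefix_append_drop[OF _ band_length])
    show "\<nu> ! i = replicate A X ! i" if "i < A" for i
      using sums[of i] sums[of "Suc i"] sum_list_take_Suc[of i \<nu>] band_length that by simp
    show "drop A \<nu> = [1]"
      using band_tail_sum sums[of A] band_tail_positive positive_list_sum_1 by simp
  qed simp
qed

text \<open>If \<open>\<nu>\<^sub>1 = X + 1\<close> then the parts \<open>\<nu>\<^sub>2, \<dots>, \<nu>\<^sub>A\<^sub>-\<^sub>1\<close> equal \<open>X\<close>: two consecutive parts below \<open>X\<close>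
  would violate the lower bound.\<close>
lemma band_first_part_high_middle:
  assumes first: "\<nu> ! 0 = X + 1"
  shows "\<And>i. i < length \<nu> \<Longrightarrow> 1 \<le> i \<Longrightarrow> \<nu> ! i \<le> X"
    and "\<And>k. 1 \<le> k \<Longrightarrow> k \<le> A - 2 \<Longrightarrow> \<nu> ! k = X"
proof -
  have "\<nu> ! 1 \<le> X"
    using upper[of 2] A band_length band_nonempty sum_list_take_Suc[of 0 \<nu>] sum_list_take_Suc[of 1 \<nu>] first
    by (simp add: numeral_2_eq_2)
  then show le: "\<nu> ! i \<le> X" if "i < length \<nu>" "1 \<le> i" for i
    using band_part_antimono[of 1 i] that by simp
  show "\<nu> ! k = X" if k: "1 \<le> k" "k \<le> A - 2" for k
  proof (rule ccontr)
    assume "\<nu> ! k \<noteq> X"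
    moreover have "k < length \<nu>" "Suc k < length \<nu>" using k band_length A by simp_all
    ultimately have small: "\<nu> ! k < X" "\<nu> ! Suc k < X"
      using le[of k] band_part_antimono[of k "Suc k"] k by simp_all
    have "Suc (Suc k) * X \<le> sum_list (take k \<nu>) + \<nu> ! k + \<nu> ! Suc k"
      using lower[of "Suc (Suc k)"] sum_list_take_Suc[of k \<nu>] sum_list_take_Suc[of "Suc k" \<nu>]
        k band_length A by simp
    moreover have "sum_list (take k \<nu>) \<le> k * X + 1" using k by (intro upper) simp_all
    ultimately show False using small by simp
  qed
qed

text \<open>With \<open>\<nu>\<^sub>1 = X + 1\<close> the first \<open>A - 1\<close> parts sum to \<open>(A - 1) X + 1\<close>, so the lower bound at \<open>A\<close>
  leaves \<open>X - 1\<close> or \<open>X\<close> for the part \<open>\<nu>\<^sub>A\<close>.\<close>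
lemma band_first_part_high_last:
  assumes first: "\<nu> ! 0 = X + 1"
  shows "sum_list (take A \<nu>) = X + 1 + (A - 2) * X + \<nu> ! (A - 1)"
    and "\<nu> ! (A - 1) = X \<or> \<nu> ! (A - 1) = X - 1"
proof -
  note mid = band_first_part_high_middle[OF first]
  have sums: "sum_list (take (Suc k) \<nu>) = X + 1 + k * X" if "k \<le> A - 2" for k
    using that
  proof (induction k)
    case 0 then show ?case using band_nonempty first by (cases \<nu>) auto
  next
    case (Suc k)
    then show ?case using sum_list_take_Suc[of "Suc k" \<nu>] mid(2)[of "Suc k"] band_length A by simp
  qed
  have "A - 1 < length \<nu>" "Suc (A - 1) = A" "Suc (A - 2) = A - 1" using A band_length by auto
  then show last: "sum_list (take A \<nu>) = X + 1 + (A - 2) * X + \<nu> ! (A - 1)"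
    using sums[of "A - 2"] sum_list_take_Suc[of "A - 1" \<nu>] by simp
  have "A = Suc (Suc (A - 2))" using A by simp
  then have "A * X = X + (A - 2) * X + X" by (metis add.commute add.left_commute mult_Suc)
  then have "X - 1 \<le> \<nu> ! (A - 1)" "\<nu> ! (A - 1) \<le> X"
    using lower[of A] last mid(1)[of "A - 1"] band_length A by simp_all
  then show "\<nu> ! (A - 1) = X \<or> \<nu> ! (A - 1) = X - 1" by linarith
qed

lemma band_first_part_high:
  assumes first: "\<nu> ! 0 = X + 1"
  shows "\<nu> = (X + 1) # replicate (A - 2) X @ [X - 1, 1] \<or> \<nu> = (X + 1) # replicate (A - 1) X"
proof -
  note mid = band_first_part_high_middle(2)[OF first]
  note last = band_first_part_high_last(1)[OF first]
  have A_eq: "A = Suc (Suc (A - 2))" using A by simp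
  have "A * X = X + (A - 2) * X + X" by (subst A_eq) (simp add: algebra_simps)
  consider "\<nu> ! (A - 1) = X" | "\<nu> ! (A - 1) = X - 1" using band_first_part_high_last(2)[OF first] by blast
  then show ?thesis
  proof cases
    case 1
    have "\<nu> = ((X + 1) # replicate (A - 1) X) @ []"
    proof (rule eq_prefix_append_drop[OF _ band_length])
      show "\<nu> ! i = ((X + 1) # replicate (A - 1) X) ! i" if "i < A" for i
        using first mid[of i] 1 that by (cases "i = A - 1") (auto simp: nth_Cons')
      have "sum_list (drop A \<nu>) = 0" using band_tail_sum last 1 \<open>A * X = _\<close> by simp
      then show "drop A \<nu> = []" using band_tail_positive positive_list_sum_0 by blast
    qed (use A in simp)
    then show ?thesis by simp
  next
    case 2
    have "\<nu> = ((X + 1) # replicate (A - 2) X @ [X - 1]) @ [1]"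
    proof (rule eq_prefix_append_drop[OF _ band_length])
      show "\<nu> ! i = ((X + 1) # replicate (A - 2) X @ [X - 1]) ! i" if "i < A" for i
        using first mid[of i] 2 that A_eq
        by (cases "i = A - 1") (auto simp: nth_Cons' nth_append)
      have "sum_list (drop A \<nu>) = 1" using band_tail_sum last 2 \<open>A * X = _\<close> X by simp
      then show "drop A \<nu> = [1]" using band_tail_positive positive_list_sum_1 by blast
    qed (use A in simp)
    then show ?thesis by simp
  qed
qed

lemma band_cases:
  "\<nu> = replicate A X @ [1] \<or> \<nu> = (X + 1) # replicate (A - 2) X @ [X - 1, 1] \<or>
   \<nu> = (X + 1) # replicate (A - 1) X"
  using band_first_part band_first_part_low band_first_part_high by blast

end

section \<open>The dominance interval \<open>[w, n]\<close> of \<open>\<lambda>/1\<close>\<close>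

lemma dominates_le_refl: "dominates_le u u"
  unfolding dominates_le_def by simp

lemma sum_list_take_Cons: "sum_list (take i (h # l)) = (if i = 0 then 0 else h + sum_list (take (i - 1) l))"
  by (cases i) auto

lemma dominates_le_shared_block:
  fixes pu pv R s t :: "nat list"
  assumes len: "length pu = length pv"
    and prefix: "\<forall>k \<le> length pu. sum_list (take k pu) \<le> sum_list (take k pv)"
    and suffix: "\<forall>i. sum_list pu + sum_list (take i s) \<le> sum_list pv + sum_list (take i t)"
    and total: "sum_list (pu @ R @ s) = sum_list (pv @ R @ t)"
  shows "dominates_le (pu @ R @ s) (pv @ R @ t)"
  unfolding dominates_le_def
proof (intro conjI allI)
  fix k
  show "sum_list (take k (pu @ R @ s)) \<le> sum_list (take k (pv @ R @ t))"
  proof (cases "k \<le> length pu")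
    case False
    define j where "j = k - length pu"
    have "sum_list (take k (pu @ R @ s)) = sum_list pu + sum_list (take j R) + sum_list (take (j - length R) s)"
      "sum_list (take k (pv @ R @ t)) = sum_list pv + sum_list (take j R) + sum_list (take (j - length R) t)"
      using False len unfolding j_def by simp_all
    then show ?thesis using suffix[rule_format, of "j - length R"] by simp
  qed (use prefix len in simp)
qed (rule total)

context
  fixes a x b y :: nat
  assumes a1: "1 \<le> a" and x1: "1 \<le> x" and b1: "1 \<le> b" and y1: "1 \<le> y"
begin

text \<open>For \<open>b \<ge> 2\<close> the interval contains a partition outside the support: raise the first
  two trailing ones of \<open>w\<close> to a single \<open>2\<close>.\<close>
lemma interval_witness_b2:
  assumes b2: "2 \<le> b"
  defines "w \<equiv> (x + y) # replicate a (x + 1) @ replicate b (1::nat)"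
    and "n \<equiv> (x + y + 1) # replicate a (x + 1) @ replicate (b - 1) (1::nat)"
    and "v \<equiv> (x + y) # replicate a (x + 1) @ 2 # replicate (b - 2) (1::nat)"
  shows "v \<in> dom_interval w n" "v \<notin> skew_supp (hook a x b y) [1]"
proof -
  have P: "is_partition v"
    unfolding v_def is_partition_def using x1 y1 by (auto simp: sorted_wrt_append sorted_desc_replicate)
  have sums: "sum_list w = sum_list v" "sum_list v = sum_list n"
    unfolding w_def v_def n_def using b2 by (simp_all add: sum_list_replicate)
  have "dominates_le ([x + y] @ replicate a (x + 1) @ replicate b 1) ([x + y] @ replicate a (x + 1) @ (2 # replicate (b - 2) 1))"
    using b2 sums(1) unfolding w_def v_def
    by (intro dominates_le_shared_block) (auto simp: take_Cons' sum_list_take_Cons sum_list_replicate min_def)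
  moreover have "dominates_le ([x + y] @ replicate a (x + 1) @ (2 # replicate (b - 2) 1)) ([x + y + 1] @ replicate a (x + 1) @ replicate (b - 1) 1)"
    using b2 sums(2) unfolding n_def v_def
    by (intro dominates_le_shared_block) (auto simp: take_Cons' le_Suc_eq sum_list_take_Cons sum_list_replicate min_def)
  ultimately show "v \<in> dom_interval w n" unfolding dom_interval_def w_def n_def using P[unfolded v_def] v_def by simp
  show "v \<notin> skew_supp (hook a x b y) [1]"
    unfolding skew_supp_hook[OF a1 x1 b1 y1] v_def using b2 by (auto simp: le_iff_add numeral_2_eq_2)
qed

text \<open>For \<open>b = 1\<close> and \<open>y \<ge> 2\<close>: move the final box of \<open>w\<close> into the second part.\<close>
lemma interval_witness_y2:
  assumes y2: "2 \<le> y" and b: "b = 1"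
  defines "w \<equiv> (x + y) # replicate a (x + 1) @ replicate b (1::nat)"
    and "n \<equiv> (x + y + 1) # replicate a (x + 1) @ replicate (b - 1) (1::nat)"
    and "v \<equiv> (x + y) # (x + 2) # replicate (a - 1) (x + 1)"
  shows "v \<in> dom_interval w n" "v \<notin> skew_supp (hook a x b y) [1]"
proof -
  obtain a' where a': "a = Suc a'" using a1 by (cases a) auto
  have w: "w = [x + y, x + 1] @ replicate a' (x + 1) @ [1]" unfolding w_def a' b by simp
  have n: "n = [x + y + 1, x + 1] @ replicate a' (x + 1) @ []" unfolding n_def a' b by simp
  have v: "v = [x + y, x + 2] @ replicate a' (x + 1) @ []" unfolding v_def a' by simp
  have P: "is_partition v"
    unfolding v_def is_partition_def using y2 by (auto simp: sorted_wrt_append sorted_desc_replicate)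
  have "dominates_le w v" unfolding w v
    by (rule dominates_le_shared_block) (auto simp: take_Cons' le_Suc_eq numeral_2_eq_2)
  moreover have "dominates_le v n" unfolding n v
    by (rule dominates_le_shared_block) (auto simp: take_Cons' le_Suc_eq numeral_2_eq_2)
  ultimately show "v \<in> dom_interval w n" unfolding dom_interval_def using P by simp
  show "v \<notin> skew_supp (hook a x b y) [1]"
    unfolding skew_supp_hook[OF a1 x1 b1 y1] v_def by (simp add: a' b)
qed

end

lemma dom_interval_b1_y1:
  fixes a x :: nat
  assumes a1: "1 \<le> a" and x1: "1 \<le> x"
  shows "dom_interval (replicate (a + 1) (x + 1) @ [1]) ((x + 2) # replicate a (x + 1))
   = {replicate (a + 1) (x + 1) @ [1], (x + 2) # replicate (a - 1) (x + 1) @ [x, 1], (x + 2) # replicate a (x + 1)}"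
  (is "dom_interval ?w ?n = {?w, ?\<xi>, ?n}")
proof
  obtain a' where a': "a = Suc a'" using a1 by (cases a) auto
  have w: "?w = [x + 1] @ replicate a' (x + 1) @ [x + 1, 1]"
    unfolding a' by (simp add: replicate_append_same)
  have n: "?n = [x + 2] @ replicate a' (x + 1) @ [x + 1]"
    unfolding a' by (simp add: replicate_append_same)
  have \<xi>: "?\<xi> = [x + 2] @ replicate a' (x + 1) @ [x, 1]" unfolding a' by simp
  have "dominates_le ?w ?\<xi>" "dominates_le ?\<xi> ?n"
    unfolding w n \<xi> by (rule dominates_le_shared_block; simp add: sum_list_take_Cons)+
  moreover have "dominates_le ?w ?n"
    unfolding w n by (rule dominates_le_shared_block) (simp_all add: sum_list_take_Cons)
  moreover have "is_partition ?w" "is_partition ?\<xi>" "is_partition ?n"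
    unfolding is_partition_def using x1 by (auto simp: sorted_wrt_append sorted_desc_replicate)
  ultimately show "{?w, ?\<xi>, ?n} \<subseteq> dom_interval ?w ?n"
    unfolding dom_interval_def using dominates_le_refl by auto
  show "dom_interval ?w ?n \<subseteq> {?w, ?\<xi>, ?n}"
  proof
    fix \<nu> assume "\<nu> \<in> dom_interval ?w ?n"
    then have P: "is_partition \<nu>" and lo: "dominates_le ?w \<nu>" and hi: "dominates_le \<nu> ?n"
      unfolding dom_interval_def by auto
    have w_sums: "sum_list (take k ?w) = k * (x + 1)" if "k \<le> a + 1" for k
    proof -
      have "take k ?w = replicate k (x + 1)" using that by (simp del: replicate_Suc add: take_append)
      then show ?thesis by (simp del: replicate_Suc add: sum_list_replicate)
    qed
    have n_sums: "sum_list (take k ?n) = k * (x + 1) + 1" if "1 \<le> k" "k \<le> a + 1" for k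
      using that by (cases k) (simp_all add: sum_list_replicate)
    have "\<nu> = replicate (a + 1) (x + 1) @ [1] \<or> \<nu> = (x + 1 + 1) # replicate (a + 1 - 2) (x + 1) @ [x + 1 - 1, 1]
        \<or> \<nu> = (x + 1 + 1) # replicate (a + 1 - 1) (x + 1)"
    proof (rule band_cases)
      show "2 \<le> x + 1" "2 \<le> a + 1" "is_partition \<nu>" using a1 x1 P by simp_all
      show "sum_list \<nu> = (a + 1) * (x + 1) + 1"
        using lo w_sums[of "a + 1"] unfolding dominates_le_def by (simp add: sum_list_replicate)
      show "k * (x + 1) \<le> sum_list (take k \<nu>)" if "k \<le> a + 1" for k
        using lo w_sums[OF that] unfolding dominates_le_def by metis
      show "sum_list (take k \<nu>) \<le> k * (x + 1) + 1" if "1 \<le> k" "k \<le> a + 1" for k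
        using hi n_sums[OF that] unfolding dominates_le_def by metis
    qed
    then show "\<nu> \<in> {?w, ?\<xi>, ?n}" by auto
  qed
qed

lemma conj_part_b1_y1:
  fixes a x :: nat
  assumes a1: "1 \<le> a" and x1: "1 \<le> x"
  shows "conj_part (replicate (a + 1) (x + 1) @ [1]) = hook_minus_leg a x 1 1"
    and "conj_part ((x + 2) # replicate (a - 1) (x + 1) @ [x, 1]) = hook_minus_inner a x 1 1"
    and "conj_part ((x + 2) # replicate a (x + 1)) = hook_minus_arm a x 1 1"
proof -
  obtain a' where a': "a = Suc a'" using a1 by (cases a) auto
  obtain x' where x': "x = Suc x'" using x1 by (cases x) auto
  show "conj_part (replicate (a + 1) (x + 1) @ [1]) = hook_minus_leg a x 1 1"
    by (rule conj_part_eqI)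
      (auto simp: hook_minus_leg_def length_filter_gt_replicate nth_cons_replicate)
  show "conj_part ((x + 2) # replicate (a - 1) (x + 1) @ [x, 1]) = hook_minus_inner a x 1 1"
    by (rule conj_part_eqI) (auto simp: hook_minus_inner_def length_filter_gt_cons_replicate
      length_filter_gt_replicate nth_cons_replicate nth_append nth_Cons' a' x')
  show "conj_part ((x + 2) # replicate a (x + 1)) = hook_minus_arm a x 1 1"
    by (rule conj_part_eqI)
      (auto simp: hook_minus_arm_def length_filter_gt_replicate nth_cons_replicate nth_append a')
qed

context
  fixes a x b y :: nat
  assumes a1: "1 \<le> a" and x1: "1 \<le> x" and b1: "1 \<le> b" and y1: "1 \<le> y"
begin

lemma hook_b1_y1:
  assumes b: "b = 1" and y: "y = 1"
  defines "\<xi>1 \<equiv> replicate (a + 1) (x + 1) @ [1]"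
    and "\<xi>2 \<equiv> (x + 2) # replicate (a - 1) (x + 1) @ [x, 1]"
    and "\<xi>3 \<equiv> (x + 2) # replicate a (x + 1)"
  shows "dom_interval (skew_w (hook a x b y) [1]) (skew_n (hook a x b y) [1]) = {\<xi>1, \<xi>2, \<xi>3}"
    and "skew_supp (hook a x b y) [1] = {\<xi>1, \<xi>2, \<xi>3}"
    and "lr_coeff (hook a x b y) [1] = (\<lambda>\<nu>. if \<nu> \<in> {conj_part \<xi>1, conj_part \<xi>2, conj_part \<xi>3} then 1 else 0)"
proof -
  have "skew_w (hook a x b y) [1] = \<xi>1" "skew_n (hook a x b y) [1] = \<xi>3"
    using skew_w_n_hook[OF a1 x1 b1 y1] unfolding \<xi>1_def \<xi>3_def by (simp_all add: b y)
  then show "dom_interval (skew_w (hook a x b y) [1]) (skew_n (hook a x b y) [1]) = {\<xi>1, \<xi>2, \<xi>3}"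
    unfolding \<xi>1_def \<xi>2_def \<xi>3_def using dom_interval_b1_y1[OF a1 x1] by simp
  show "skew_supp (hook a x b y) [1] = {\<xi>1, \<xi>2, \<xi>3}"
    using skew_supp_hook[OF a1 x1 b1 y1] unfolding \<xi>1_def \<xi>2_def \<xi>3_def by (auto simp: b y)
  show "lr_coeff (hook a x b y) [1] = (\<lambda>\<nu>. if \<nu> \<in> {conj_part \<xi>1, conj_part \<xi>2, conj_part \<xi>3} then 1 else 0)"
    using lr_coeff_hook[OF a1 x1 b1 y1] unfolding \<xi>1_def \<xi>2_def \<xi>3_def conj_part_b1_y1[OF a1 x1]
    by (simp add: b y insert_commute disj_commute disj_left_commute)
qed

lemma skew_supp_eq_dom_interval_iff:
  "skew_supp (hook a x b y) [1] = dom_interval (skew_w (hook a x b y) [1]) (skew_n (hook a x b y) [1])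
   \<longleftrightarrow> b = 1 \<and> y = 1"
proof
  assume eq: "skew_supp (hook a x b y) [1] = dom_interval (skew_w (hook a x b y) [1]) (skew_n (hook a x b y) [1])"
  show "b = 1 \<and> y = 1"
  proof (rule ccontr)
    assume "\<not> (b = 1 \<and> y = 1)"
    then consider "2 \<le> b" | "b = 1" "2 \<le> y" using b1 y1 by linarith
    then show False
    proof cases
      case 1
      then show False using interval_witness_b2[OF a1 x1 b1 y1 1] eq unfolding skew_w_n_hook[OF a1 x1 b1 y1] by blast
    next
      case 2
      then show False using interval_witness_y2[OF a1 x1 b1 y1 2(2,1)] eq unfolding skew_w_n_hook[OF a1 x1 b1 y1] by blast
    qed
  qed
next
  assume "b = 1 \<and> y = 1"
  then show "skew_supp (hook a x b y) [1] = dom_interval (skew_w (hook a x b y) [1]) (skew_n (hook a x b y) [1])"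
    using hook_b1_y1 by simp
qed

end

theorem mainTheorem15:
  fixes a x b y :: nat
  assumes "1 \<le> a" "1 \<le> x" "1 \<le> b" "1 \<le> y"
  defines "lam \<equiv> (a + b + 1) # replicate x (a + 1) @ replicate y 1"
      and "mu \<equiv> [1]"
  shows "(skew_supp lam mu = dom_interval (skew_w lam mu) (skew_n lam mu) \<longleftrightarrow> b = 1 \<and> y = 1)
       \<and> (b = 1 \<and> y = 1 \<longrightarrow>
           (let \<xi>1 = replicate (a + 1) (x + 1) @ [1];
                \<xi>2 = (x + 2) # replicate (a - 1) (x + 1) @ [x, 1];
                \<xi>3 = (x + 2) # replicate a (x + 1)
            in dom_interval (skew_w lam mu) (skew_n lam mu) = {\<xi>1, \<xi>2, \<xi>3}
             \<and> skew_supp lam mu = {\<xi>1, \<xi>2, \<xi>3}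
             \<and> (\<forall>\<nu>. lr_coeff lam mu \<nu> = (if \<nu> \<in> {conj_part \<xi>1, conj_part \<xi>2, conj_part \<xi>3} then 1 else 0))))"
proof -
  have lam: "lam = hook a x b y" unfolding lam_def hook_def ..
  show ?thesis
    unfolding lam mu_def Let_def
    using skew_supp_eq_dom_interval_iff[OF assms(1-4)] hook_b1_y1[OF assms(1-4)] by simp
qed

end
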